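(* In the setting below, for fixed $\boldsymbol\lambda\in(0,\infty)^K$, $$\max_{1\le i\le n}\frac1n\Big|\operatorname{Tr}\Big(\mathbf M_i^2\sum_{j\ne i}\frac{z_jz_j^\top}{n}\Big)-\operatorname{Tr}\Big(\mathbf M^2\frac{\mathbf Z^\top\mathbf Z}{n}\Big)\Big|\to0\quad\text{almost surely.}$$
   Context: Setting: $n\to\infty$, $p=p(n)$ features in $K$ fixed disjoint groups $\mathcal G_g$ with $p_g/n\to\gamma_g>0$. $\mathbf Z$ is $n\times p$ with rows $z_i^\top$, where the $z_i$ are i.i.d. vectors with i.i.d. entries of mean $0$, variance $1$ and uniformly bounded $(8+\eta)$-th moments for some $\eta>0$. $\boldsymbol\Sigma$ is a deterministic $p\times p$ covariance matrix with eigenvalues in $[h_1,h_2]$, fixed $h_1,h_2>0$. $\boldsymbol\Lambda$ is the $p\times p$ diagonal matrix with entry $\lambda_g$ at $j\in\mathcal G_g$. $\mathbf M=(\mathbf Z^\top\mathbf Z/n+\boldsymbol\Sigma^{-1/2}\boldsymbol\Lambda\boldsymbol\Sigma^{-1/2})^{-1}$ and $\mathbf M_i=(\mathbf Z^\top\mathbf Z/n+\boldsymbol\Sigma^{-1/2}\boldsymbol\Lambda\boldsymbol\Sigma^{-1/2}-z_iz_i^\top/n)^{-1}$. *)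

theory Defs
  imports "HOL-Probability.Probability" "Jordan_Normal_Form.Char_Poly"
    "Jordan_Normal_Form.Gauss_Jordan_Elimination"
begin

definition mtrace :: "real mat \<Rightarrow> real" where
  "mtrace A = (\<Sum>i<dim_row A. A $$ (i, i))"

definition minv :: "real mat \<Rightarrow> real mat" where
  "minv A = the (mat_inverse A)"

definition sym_mat :: "real mat \<Rightarrow> bool" where
  "sym_mat A \<longleftrightarrow> transpose_mat A = A"

definition pos_def_mat :: "real mat \<Rightarrow> bool" where
  "pos_def_mat A \<longleftrightarrow> square_mat A \<and> sym_mat A \<and>
     (\<forall>v \<in> carrier_vec (dim_row A). v \<noteq> 0\<^sub>v (dim_row A) \<longrightarrow> v \<bullet> (A *\<^sub>v v) > 0)"

definition inv_sqrt_mat :: "real mat \<Rightarrow> real mat" where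
  "inv_sqrt_mat S = (THE R. R \<in> carrier_mat (dim_row S) (dim_row S) \<and> pos_def_mat R
                         \<and> R * R = minv S)"

definition data_mat :: "nat \<Rightarrow> nat \<Rightarrow> (nat \<Rightarrow> nat \<Rightarrow> real) \<Rightarrow> real mat" where
  "data_mat n p x = mat n p (\<lambda>(i, j). x i j)"

definition row_outer :: "real mat \<Rightarrow> nat \<Rightarrow> real mat" where
  "row_outer Z i = mat (dim_col Z) (dim_col Z) (\<lambda>(a, b). Z $$ (i, a) * Z $$ (i, b))"

(* Lambda: diagonal with lambda_g on group g *)
definition Lambda_mat :: "nat \<Rightarrow> nat \<Rightarrow> (nat \<Rightarrow> nat set) \<Rightarrow> (nat \<Rightarrow> real) \<Rightarrow> real mat" where
  "Lambda_mat p K G lam = mat p p (\<lambda>(a, b). if a = b then (\<Sum>g<K. if a \<in> G g then lam g else 0) else 0)"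

end

theory Submission
  imports Defs
begin

text \<open>The bound is deterministic: for every sample and every \<open>n\<close> the maximum is at most a constant
  times \<open>1 / n\<close>. Put \<open>L = \<Sigma>\<^sup>-\<^sup>1\<^sup>/\<^sup>2 \<Lambda> \<Sigma>\<^sup>-\<^sup>1\<^sup>/\<^sup>2\<close>; the eigenvalue bounds on \<open>\<Sigma>\<close> give
  \<open>v \<bullet> L v \<ge> c |v|\<^sup>2\<close> and \<open>|L v| \<le> C |v|\<close> with \<open>c = \<lambda>\<^sub>m\<^sub>i\<^sub>n / h2\<close> and \<open>C = \<lambda>\<^sub>m\<^sub>a\<^sub>x / h1\<close>.
  For fixed \<open>i\<close> let \<open>B = (Z\<^sup>T Z - z\<^sub>i z\<^sub>i\<^sup>T) / n\<close>, which is positive semidefinite, \<open>u = z\<^sub>i / sqrt n\<close>,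
  \<open>N = (B + L)\<^sup>-\<^sup>1\<close> and \<open>M = (B + L + u u\<^sup>T)\<^sup>-\<^sup>1\<close>. From \<open>X\<^sup>2 (X\<^sup>-\<^sup>1 - L) = X - X\<^sup>2 L\<close> the difference
  of the two traces is \<open>tr (N - M) - tr ((N - M) N L) - tr (M (N - M) L)\<close>, and by Sherman-Morrison
  \<open>N - M = w w\<^sup>T / (1 + u \<bullet> w)\<close> with \<open>w = N u\<close>. As \<open>c |w|\<^sup>2 \<le> u \<bullet> w\<close> and \<open>N\<close>, \<open>M\<close> have norm at
  most \<open>1 / c\<close>, the difference is at most \<open>1 / c + 2 C / c\<^sup>2\<close>, uniformly in \<open>i\<close> and \<open>n\<close>.

  That \<open>\<Sigma>\<^sup>-\<^sup>1\<^sup>/\<^sup>2\<close> is well defined, i.e. that \<open>\<Sigma>\<^sup>-\<^sup>1\<close> has a unique positive definite square root,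
  follows from the spectral theorem for real symmetric matrices, obtained by Householder deflation.\<close>

no_notation Inner_Product.inner (infix "\<bullet>" 70)
no_notation Finite_Cartesian_Product.vec_nth (infixl "$" 90)

lemma scalar_prod_self_nonneg: "0 \<le> (v :: real vec) \<bullet> v"
  using conjugate_square_ge_0_vec[of v] by simp

lemma scalar_prod_self_pos:
  "(v :: real vec) \<in> carrier_vec n \<Longrightarrow> v \<noteq> 0\<^sub>v n \<Longrightarrow> 0 < v \<bullet> v"
  using conjugate_square_greater_0_vec[of v n] by simp

lemma scalar_prod_self_eq_sum: "(v :: real vec) \<in> carrier_vec n \<Longrightarrow> v \<bullet> v = (\<Sum>k<n. (v $ k)\<^sup>2)"
  unfolding scalar_prod_def by (simp add: power2_eq_square lessThan_atLeast0)

definition vec_norm :: "real vec \<Rightarrow> real" where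
  "vec_norm v = sqrt (v \<bullet> v)"

lemma vec_norm_nonneg: "0 \<le> vec_norm v"
  unfolding vec_norm_def using scalar_prod_self_nonneg[of v] by simp

lemma vec_norm_square: "(vec_norm v)\<^sup>2 = v \<bullet> v"
  unfolding vec_norm_def using scalar_prod_self_nonneg[of v] by simp

lemma abs_scalar_prod_le_vec_norm:
  assumes "x \<in> carrier_vec n" "y \<in> carrier_vec n"
  shows "\<bar>x \<bullet> y\<bar> \<le> vec_norm x * vec_norm y"
proof -
  have "(x \<bullet> y)\<^sup>2 \<le> (x \<bullet> x) * (y \<bullet> y)"
    using Cauchy_Schwarz_ineq_sum[of "\<lambda>i. x $ i" "\<lambda>i. y $ i" "{0..<n}"] assms
    by (simp add: scalar_prod_def power2_eq_square)
  then show ?thesis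
    unfolding vec_norm_def by (metis real_sqrt_abs real_sqrt_le_mono real_sqrt_mult)
qed

lemma mult_unit_vec_eq_col:
  assumes "A \<in> carrier_mat nr nc" "j < nc"
  shows "A *\<^sub>v unit_vec nc j = (col A j :: real vec)"
  using assms by (intro eq_vecI) (auto simp: mult_mat_vec_def)

lemma eq_matI_mult_vec:
  assumes "A \<in> carrier_mat nr nc" "B \<in> carrier_mat nr nc"
    and "\<And>v. v \<in> carrier_vec nc \<Longrightarrow> A *\<^sub>v v = B *\<^sub>v (v :: real vec)"
  shows "A = B"
proof (rule eq_matI)
  fix i j assume i: "i < dim_row B" and j: "j < dim_col B"
  have "col A j = col B j"
    using assms mult_unit_vec_eq_col[OF assms(1)] mult_unit_vec_eq_col[OF assms(2)] j
    by (metis carrier_matD(2) unit_vec_carrier)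
  then have "col A j $ i = col B j $ i" by simp
  then show "A $$ (i, j) = B $$ (i, j)" using i j assms(1,2) by simp
qed (use assms in auto)

lemma mult_smult_mat_vec:
  "A \<in> carrier_mat nr nc \<Longrightarrow> v \<in> carrier_vec nc \<Longrightarrow>
    (k \<cdot>\<^sub>m A) *\<^sub>v v = k \<cdot>\<^sub>v (A *\<^sub>v (v :: real vec))"
  by (intro eq_vecI) (auto simp: mult_mat_vec_def scalar_prod_def sum_distrib_left mult.assoc)

lemma transpose_smult_mat: "(k \<cdot>\<^sub>m A)\<^sup>T = k \<cdot>\<^sub>m A\<^sup>T"
  by (intro eq_matI) auto

lemma sym_mat_scalar_prod_swap:
  assumes "A \<in> carrier_mat n n" "sym_mat A" "x \<in> carrier_vec n" "y \<in> carrier_vec n"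
  shows "x \<bullet> (A *\<^sub>v y) = (A *\<^sub>v x) \<bullet> y"
  using transpose_vec_mult_scalar[of A n n y x] assms by (simp add: sym_mat_def)

lemma sym_mat_congruence:
  fixes A D :: "real mat"
  assumes A: "A \<in> carrier_mat n m" and D: "D \<in> carrier_mat m m" "sym_mat D"
  shows "sym_mat (A * D * A\<^sup>T)"
proof -
  have "(A * D * A\<^sup>T)\<^sup>T = A * (A * D)\<^sup>T"
    using transpose_mult[OF mult_carrier_mat[OF A D(1)], of "A\<^sup>T" n] A by simp
  also have "\<dots> = A * D * A\<^sup>T"
    using transpose_mult[OF A D(1)] D A unfolding sym_mat_def by (simp add: assoc_mult_mat[of _ n m _ m _ n])
  finally show ?thesis unfolding sym_mat_def .
qed

definition outer_prod :: "real vec \<Rightarrow> real vec \<Rightarrow> real mat" where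
  "outer_prod x y = mat (dim_vec x) (dim_vec y) (\<lambda>(i, j). x $ i * y $ j)"

lemma outer_prod_carrier [simp]:
  "x \<in> carrier_vec n \<Longrightarrow> y \<in> carrier_vec m \<Longrightarrow> outer_prod x y \<in> carrier_mat n m"
  unfolding outer_prod_def by auto

lemma outer_prod_mult_vec:
  "x \<in> carrier_vec n \<Longrightarrow> y \<in> carrier_vec m \<Longrightarrow> z \<in> carrier_vec m \<Longrightarrow>
    outer_prod x y *\<^sub>v z = (y \<bullet> z) \<cdot>\<^sub>v x"
  by (intro eq_vecI)
    (auto simp: outer_prod_def mult_mat_vec_def scalar_prod_def sum_distrib_right intro!: sum.cong)

lemma transpose_outer_prod: "(outer_prod x y)\<^sup>T = outer_prod y x"
  unfolding outer_prod_def by (intro eq_matI) auto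

lemma mult_outer_prod:
  "X \<in> carrier_mat n m \<Longrightarrow> x \<in> carrier_vec m \<Longrightarrow> y \<in> carrier_vec k \<Longrightarrow>
    X * outer_prod x y = outer_prod (X *\<^sub>v x) y"
  by (intro eq_matI) (auto simp: outer_prod_def scalar_prod_def mult_mat_vec_def
      sum_distrib_right mult.assoc intro!: sum.cong)

lemma outer_prod_mult:
  "X \<in> carrier_mat m k \<Longrightarrow> x \<in> carrier_vec n \<Longrightarrow> y \<in> carrier_vec m \<Longrightarrow>
    outer_prod x y * X = outer_prod x (X\<^sup>T *\<^sub>v y)"
  by (intro eq_matI) (auto simp: outer_prod_def scalar_prod_def mult_mat_vec_def
      sum_distrib_left mult.assoc mult.left_commute intro!: sum.cong)

lemma mtrace_add: "A \<in> carrier_mat n n \<Longrightarrow> B \<in> carrier_mat n n \<Longrightarrow> mtrace (A + B) = mtrace A + mtrace B"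
  unfolding mtrace_def by (simp add: sum.distrib)

lemma mtrace_minus: "A \<in> carrier_mat n n \<Longrightarrow> B \<in> carrier_mat n n \<Longrightarrow> mtrace (A - B) = mtrace A - mtrace B"
  unfolding mtrace_def by (simp add: sum_subtractf)

lemma mtrace_smult: "A \<in> carrier_mat n n \<Longrightarrow> mtrace (k \<cdot>\<^sub>m A) = k * mtrace A"
  unfolding mtrace_def by (auto simp: sum_distrib_left intro!: sum.cong)

lemma mtrace_outer_prod: "x \<in> carrier_vec n \<Longrightarrow> y \<in> carrier_vec n \<Longrightarrow> mtrace (outer_prod x y) = x \<bullet> y"
  unfolding mtrace_def outer_prod_def scalar_prod_def by (simp add: lessThan_atLeast0)

lemma mtrace_outer_prod_mult:
  "X \<in> carrier_mat n n \<Longrightarrow> x \<in> carrier_vec n \<Longrightarrow> y \<in> carrier_vec n \<Longrightarrow>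
    mtrace (outer_prod x y * X) = x \<bullet> (X\<^sup>T *\<^sub>v y)"
  by (simp add: outer_prod_mult mtrace_outer_prod[of _ n])

lemma quad_form_add:
  "A \<in> carrier_mat n n \<Longrightarrow> B \<in> carrier_mat n n \<Longrightarrow> v \<in> carrier_vec n \<Longrightarrow>
    v \<bullet> ((A + B) *\<^sub>v v) = v \<bullet> (A *\<^sub>v v) + v \<bullet> (B *\<^sub>v (v :: real vec))"
  by (simp add: add_mult_distrib_mat_vec[of _ n n] scalar_prod_add_distrib[of _ n])

lemma quad_form_outer_prod:
  "u \<in> carrier_vec n \<Longrightarrow> v \<in> carrier_vec n \<Longrightarrow> v \<bullet> (outer_prod u u *\<^sub>v v) = (u \<bullet> v)\<^sup>2"
  by (simp add: outer_prod_mult_vec[of _ n] comm_scalar_prod[of u n v] power2_eq_square)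

lemma diagonal_mult_vec_index:
  fixes D :: "real mat"
  assumes "D \<in> carrier_mat n n" "diagonal_mat D" "y \<in> carrier_vec n" "k < n"
  shows "(D *\<^sub>v y) $ k = D $$ (k, k) * y $ k"
proof -
  have "(D *\<^sub>v y) $ k = (\<Sum>i\<in>{0..<n}. D $$ (k, i) * y $ i)"
    using assms by (simp add: mult_mat_vec_def scalar_prod_def)
  also have "\<dots> = (\<Sum>i\<in>{0..<n}. if i = k then D $$ (k, k) * y $ k else 0)"
    using assms unfolding diagonal_mat_def by (intro sum.cong) auto
  finally show ?thesis using assms(4) by simp
qed

lemma diagonal_mult_mat_index:
  fixes D M :: "real mat"
  assumes D: "D \<in> carrier_mat n n" "diagonal_mat D" and M: "M \<in> carrier_mat n m"
    and ij: "i < n" "j < m"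
  shows "(D * M) $$ (i, j) = D $$ (i, i) * M $$ (i, j)"
proof -
  have "(D * M) $$ (i, j) = (\<Sum>k\<in>{0..<n}. D $$ (i, k) * M $$ (k, j))"
    using D M ij by (simp add: scalar_prod_def)
  also have "\<dots> = (\<Sum>k\<in>{0..<n}. if k = i then D $$ (i, i) * M $$ (i, j) else 0)"
    using D ij unfolding diagonal_mat_def by (intro sum.cong) auto
  finally show ?thesis using ij by simp
qed

lemma diagonal_mat_sym:
  assumes "D \<in> carrier_mat n n" "diagonal_mat D"
  shows "sym_mat D"
  unfolding sym_mat_def
proof (rule eq_matI)
  fix i j assume "i < dim_row D" "j < dim_col D"
  then show "D\<^sup>T $$ (i, j) = D $$ (i, j)"
    using assms unfolding diagonal_mat_def by (cases "i = j") auto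
qed (use assms in auto)

lemma diagonal_quad_form:
  fixes D :: "real mat"
  assumes D: "D \<in> carrier_mat n n" "diagonal_mat D" and y: "y \<in> carrier_vec n"
  shows "y \<bullet> (D *\<^sub>v y) = (\<Sum>k<n. D $$ (k, k) * (y $ k)\<^sup>2)"
proof -
  have "y \<bullet> (D *\<^sub>v y) = (\<Sum>k<n. y $ k * (D *\<^sub>v y) $ k)"
    unfolding scalar_prod_def using D by (simp add: lessThan_atLeast0)
  also have "\<dots> = (\<Sum>k<n. D $$ (k, k) * (y $ k)\<^sup>2)"
    by (intro sum.cong refl)
      (simp del: index_mult_mat_vec add: diagonal_mult_vec_index[OF D y] power2_eq_square)
  finally show ?thesis .
qed

lemma diagonal_mult_vec_square_norm:
  fixes D :: "real mat"
  assumes D: "D \<in> carrier_mat n n" "diagonal_mat D" and y: "y \<in> carrier_vec n"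
  shows "(D *\<^sub>v y) \<bullet> (D *\<^sub>v y) = (\<Sum>k<n. (D $$ (k, k))\<^sup>2 * (y $ k)\<^sup>2)"
proof -
  have "(D *\<^sub>v y) \<bullet> (D *\<^sub>v y) = (\<Sum>k<n. (D *\<^sub>v y) $ k * (D *\<^sub>v y) $ k)"
    unfolding scalar_prod_def using D by (simp add: lessThan_atLeast0)
  also have "\<dots> = (\<Sum>k<n. (D $$ (k, k))\<^sup>2 * (y $ k)\<^sup>2)"
    by (intro sum.cong refl)
      (simp del: index_mult_mat_vec add: diagonal_mult_vec_index[OF D y] power2_eq_square)
  finally show ?thesis .
qed

lemma minv_correct:
  fixes A :: "real mat"
  assumes A: "A \<in> carrier_mat n n" and det: "det A \<noteq> 0"
  shows "minv A \<in> carrier_mat n n" "A * minv A = 1\<^sub>m n" "minv A * A = 1\<^sub>m n"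
proof -
  have "A \<in> Units (ring_mat TYPE(real) n n)" by (rule det_non_zero_imp_unit[OF A det])
  then obtain B where "mat_inverse A = Some B" using mat_inverse(1)[OF A, where b = n] by fastforce
  with mat_inverse(2)[OF A this] show "minv A \<in> carrier_mat n n" "A * minv A = 1\<^sub>m n" "minv A * A = 1\<^sub>m n"
    unfolding minv_def by auto
qed

lemma minv_eqI:
  fixes A X :: "real mat"
  assumes A: "A \<in> carrier_mat n n" and X: "X \<in> carrier_mat n n" and AX: "A * X = 1\<^sub>m n"
  shows "minv A = X"
proof -
  have "det A * det X = 1" using det_mult[OF A X] AX det_one by metis
  then have "det A \<noteq> 0" by auto
  note inv = minv_correct[OF A this]
  have "minv A = minv A * (A * X)" using inv(1) AX by simp
  also have "\<dots> = X" using inv(1,3) A X by (simp flip: assoc_mult_mat[of _ n n _ n _ n])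
  finally show ?thesis .
qed

lemma det_nonzero_if_quad_form_pos:
  fixes A :: "real mat"
  assumes A: "A \<in> carrier_mat n n"
    and pos: "\<And>v. v \<in> carrier_vec n \<Longrightarrow> v \<noteq> 0\<^sub>v n \<Longrightarrow> 0 < v \<bullet> (A *\<^sub>v v)"
  shows "det A \<noteq> 0"
proof
  assume "det A = 0"
  then obtain v where "v \<in> carrier_vec n" "v \<noteq> 0\<^sub>v n" "A *\<^sub>v v = 0\<^sub>v n"
    using det_0_iff_vec_prod_zero[OF A] by blast
  with pos show False by fastforce
qed

lemma sym_mat_right_inverse:
  fixes A B :: "real mat"
  assumes A: "A \<in> carrier_mat n n" "sym_mat A" and B: "B \<in> carrier_mat n n" and AB: "A * B = 1\<^sub>m n"
  shows "sym_mat B"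
proof -
  have BtA: "B\<^sup>T * A = 1\<^sub>m n"
    using arg_cong[OF AB, of transpose_mat] transpose_mult[OF A(1) B] A(2) unfolding sym_mat_def by simp
  have "B\<^sup>T = B\<^sup>T * (A * B)" unfolding AB using B by simp
  also have "\<dots> = (B\<^sup>T * A) * B" using A B by simp
  finally show ?thesis unfolding BtA sym_mat_def using B by simp
qed

lemma minv_coercive:
  fixes A :: "real mat"
  assumes A: "A \<in> carrier_mat n n"
    and coercive: "\<And>v. v \<in> carrier_vec n \<Longrightarrow> c * (v \<bullet> v) \<le> v \<bullet> (A *\<^sub>v v)" and c: "c > 0"
  shows "minv A \<in> carrier_mat n n" "A * minv A = 1\<^sub>m n" "minv A * A = 1\<^sub>m n"
    and "\<And>x. x \<in> carrier_vec n \<Longrightarrow> vec_norm (minv A *\<^sub>v x) \<le> vec_norm x / c"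
proof -
  have "0 < v \<bullet> (A *\<^sub>v v)" if "v \<in> carrier_vec n" "v \<noteq> 0\<^sub>v n" for v
    using coercive[OF that(1)] scalar_prod_self_pos[OF that] c by (meson less_le_trans mult_pos_pos)
  note inv = minv_correct[OF A det_nonzero_if_quad_form_pos[OF A this]]
  show "minv A \<in> carrier_mat n n" "A * minv A = 1\<^sub>m n" "minv A * A = 1\<^sub>m n" using inv by auto
  fix x :: "real vec" assume x: "x \<in> carrier_vec n"
  define y where "y = minv A *\<^sub>v x"
  have y: "y \<in> carrier_vec n" unfolding y_def using inv x by simp
  have Ay: "A *\<^sub>v y = x" unfolding y_def using A inv x by (simp flip: assoc_mult_mat_vec[OF A inv(1) x])
  have "c * (vec_norm y)\<^sup>2 \<le> y \<bullet> x" using coercive[OF y] unfolding Ay vec_norm_square .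
  also have "\<dots> \<le> vec_norm y * vec_norm x" using abs_scalar_prod_le_vec_norm[OF y x] by simp
  finally have "c * (vec_norm y)\<^sup>2 \<le> vec_norm y * vec_norm x" .
  then have "c * vec_norm y \<le> vec_norm x" using vec_norm_nonneg[of y] vec_norm_nonneg[of x]
    by (cases "vec_norm y = 0") (auto simp: power2_eq_square)
  then show "vec_norm (minv A *\<^sub>v x) \<le> vec_norm x / c" unfolding y_def using c by (simp add: field_simps)
qed

lemma eigenvalue_inverse_mat:
  fixes A B :: "real mat"
  assumes A: "A \<in> carrier_mat n n" and B: "B \<in> carrier_mat n n" and AB: "A * B = 1\<^sub>m n"
    and ev: "eigenvalue B \<mu>"
  shows "\<mu> \<noteq> 0" "eigenvalue A (1 / \<mu>)"
proof -
  obtain v where v: "v \<in> carrier_vec n" "v \<noteq> 0\<^sub>v n" and Bv: "B *\<^sub>v v = \<mu> \<cdot>\<^sub>v v"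
    using ev B unfolding eigenvalue_def eigenvector_def by auto
  have v_eq: "v = \<mu> \<cdot>\<^sub>v (A *\<^sub>v v)"
    using arg_cong[OF Bv, of "\<lambda>w. A *\<^sub>v w"] A B AB v by (simp flip: assoc_mult_mat_vec add: mult_mat_vec)
  show "\<mu> \<noteq> 0"
  proof
    assume "\<mu> = 0"
    then have "v = 0 \<cdot>\<^sub>v (A *\<^sub>v v)" using v_eq by simp
    also have "\<dots> = 0\<^sub>v n" using A by (intro eq_vecI) auto
    finally show False using v by simp
  qed
  then have "A *\<^sub>v v = (1 / \<mu>) \<cdot>\<^sub>v v"
    using arg_cong[OF v_eq, of "\<lambda>w. (1 / \<mu>) \<cdot>\<^sub>v w"] by (simp add: smult_smult_assoc)
  then show "eigenvalue A (1 / \<mu>)"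
    unfolding eigenvalue_def eigenvector_def using A v by auto
qed

section \<open>The spectral theorem for real symmetric matrices\<close>

lemma sym_mat_complex_eigenvalue_real:
  fixes A :: "real mat"
  assumes A: "A \<in> carrier_mat n n" "sym_mat A" and ev: "eigenvalue (map_mat complex_of_real A) r"
  shows "r \<in> \<real>"
proof -
  let ?AC = "map_mat complex_of_real A"
  obtain v where v: "v \<in> carrier_vec n" "v \<noteq> 0\<^sub>v n" and Av: "?AC *\<^sub>v v = r \<cdot>\<^sub>v v"
    using ev A unfolding eigenvalue_def eigenvector_def by auto
  txt \<open>The Hermitian form \<open>s = v\<^sup>* A v = r |v|\<^sup>2\<close> is real because \<open>A\<close> is real symmetric.\<close>
  define N where "N = (\<Sum>i<n. (cmod (v $ i))\<^sup>2)"
  define s where "s = (\<Sum>i<n. cnj (v $ i) * (?AC *\<^sub>v v) $ i)"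
  obtain k where k: "k < n" "v $ k \<noteq> 0" using v by (metis eq_vecI carrier_vecD index_zero_vec)
  have "(cmod (v $ k))\<^sup>2 \<le> N" unfolding N_def by (rule member_le_sum) (use k in auto)
  moreover have "(cmod (v $ k))\<^sup>2 > 0" using k by auto
  ultimately have N: "N > 0" by linarith
  have "s = (\<Sum>i<n. r * of_real ((cmod (v $ i))\<^sup>2))"
    unfolding s_def Av using v
    by (intro sum.cong) (auto simp: complex_norm_square[symmetric] mult.commute)
  then have s_r: "s = r * of_real N" unfolding N_def by (simp add: sum_distrib_left)
  have s_A: "s = (\<Sum>i<n. \<Sum>j<n. cnj (v $ i) * of_real (A $$ (i, j)) * v $ j)"
    unfolding s_def using A v
    by (intro sum.cong) (auto simp: mult_mat_vec_def scalar_prod_def sum_distrib_left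
        lessThan_atLeast0 mult.assoc)
  have "cnj s = (\<Sum>i<n. \<Sum>j<n. v $ i * of_real (A $$ (i, j)) * cnj (v $ j))"
    unfolding s_A by simp
  also have "\<dots> = (\<Sum>j<n. \<Sum>i<n. v $ i * of_real (A $$ (i, j)) * cnj (v $ j))"
    by (rule sum.swap)
  also have "\<dots> = s" unfolding s_A
  proof (intro sum.cong refl)
    fix i j assume "i \<in> {..<n}" "j \<in> {..<n}"
    then have "A $$ (j, i) = A $$ (i, j)" using A
      by (metis carrier_matD index_transpose_mat(1) lessThan_iff sym_mat_def)
    then show "v $ j * of_real (A $$ (j, i)) * cnj (v $ i) = cnj (v $ i) * of_real (A $$ (i, j)) * v $ j"
      by simp
  qed
  finally have "cnj r = r" using s_r N by simp
  then show ?thesis by (simp add: Reals_cnj_iff)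
qed

lemma sym_mat_real_eigenvalue_exists:
  fixes A :: "real mat"
  assumes A: "A \<in> carrier_mat n n" and sym: "sym_mat A" and n: "n > 0"
  shows "\<exists>e. eigenvalue A e"
proof -
  let ?AC = "map_mat complex_of_real A"
  have AC: "?AC \<in> carrier_mat n n" using A by auto
  have "degree (char_poly ?AC) = n" using degree_monic_char_poly[OF AC] by auto
  then have "\<not> constant (poly (char_poly ?AC))" using n by (simp add: constant_degree)
  then obtain r where r: "poly (char_poly ?AC) r = 0"
    using fundamental_theorem_of_algebra by blast
  then have "r \<in> \<real>"
    using sym_mat_complex_eigenvalue_real[OF A sym] eigenvalue_root_char_poly[OF AC] by simp
  then obtain e where "r = of_real e" by (auto elim: Reals_cases)
  then have "poly (char_poly A) e = 0" using r unfolding of_real_hom.char_poly_hom[OF A] by simp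
  then show ?thesis using eigenvalue_root_char_poly[OF A] by blast
qed

definition householder_mat :: "nat \<Rightarrow> real vec \<Rightarrow> real mat" where
  "householder_mat n x = 1\<^sub>m n - (2 / (x \<bullet> x)) \<cdot>\<^sub>m outer_prod x x"

lemma householder_mat_carrier: "x \<in> carrier_vec n \<Longrightarrow> householder_mat n x \<in> carrier_mat n n"
  unfolding householder_mat_def by (intro minus_carrier_mat smult_carrier_mat outer_prod_carrier)

lemma householder_mat_mult_vec:
  assumes "x \<in> carrier_vec n" "y \<in> carrier_vec n"
  shows "householder_mat n x *\<^sub>v y = y - (2 / (x \<bullet> x) * (x \<bullet> y)) \<cdot>\<^sub>v x"
  unfolding householder_mat_def using assms
  by (simp add: minus_mult_distrib_mat_vec[of _ n n] mult_smult_mat_vec[of _ n n]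
      outer_prod_mult_vec[of _ n] smult_smult_assoc)

lemma sym_householder_mat: "x \<in> carrier_vec n \<Longrightarrow> sym_mat (householder_mat n x)"
  unfolding householder_mat_def sym_mat_def
  by (simp add: transpose_minus[of _ n n] transpose_smult_mat transpose_outer_prod)

lemma householder_mat_involution:
  assumes x: "x \<in> carrier_vec n" "x \<noteq> 0\<^sub>v n"
  shows "householder_mat n x * householder_mat n x = 1\<^sub>m n"
proof (rule eq_matI_mult_vec[of _ n n])
  let ?H = "householder_mat n x"
  have xx: "x \<bullet> x > 0" using scalar_prod_self_pos[OF x] .
  fix y :: "real vec" assume y: "y \<in> carrier_vec n"
  have Hy: "?H *\<^sub>v y \<in> carrier_vec n" using householder_mat_carrier[OF x(1)] y by simp
  have "x \<bullet> (?H *\<^sub>v y) = x \<bullet> y - 2 / (x \<bullet> x) * (x \<bullet> y) * (x \<bullet> x)"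
    unfolding householder_mat_mult_vec[OF x(1) y] using x y by (simp add: scalar_prod_minus_distrib[of _ n])
  also have "\<dots> = - (x \<bullet> y)" using xx by simp
  finally have xHy: "x \<bullet> (?H *\<^sub>v y) = - (x \<bullet> y)" .
  have "?H * ?H *\<^sub>v y = ?H *\<^sub>v (?H *\<^sub>v y)" using householder_mat_carrier[OF x(1)] y by simp
  also have "\<dots> = y"
    unfolding householder_mat_mult_vec[OF x(1) Hy] xHy unfolding householder_mat_mult_vec[OF x(1) y]
    using x y by (intro eq_vecI) auto
  finally show "?H * ?H *\<^sub>v y = 1\<^sub>m n *\<^sub>v y" using y by simp
qed (use householder_mat_carrier[OF x(1)] in auto)

lemma householder_mat_unit_vec:
  fixes v :: "real vec"
  assumes v: "v \<in> carrier_vec n" "v \<bullet> v = 1" and n: "n > 0" and x: "v - unit_vec n 0 \<noteq> 0\<^sub>v n"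
  shows "householder_mat n (v - unit_vec n 0) *\<^sub>v unit_vec n 0 = v"
proof -
  define x where "x = v - unit_vec n 0"
  have xc: "x \<in> carrier_vec n" unfolding x_def using v by auto
  have xx: "x \<bullet> x > 0" using scalar_prod_self_pos[OF xc] x unfolding x_def by auto
  have x0: "x \<bullet> unit_vec n 0 = v $ 0 - 1" unfolding x_def using v n by simp
  have "x \<bullet> x = v \<bullet> v - v \<bullet> unit_vec n 0 - (unit_vec n 0 \<bullet> v - unit_vec n 0 \<bullet> unit_vec n 0)"
    unfolding x_def using v by (simp add: minus_scalar_prod_distrib[of _ n] scalar_prod_minus_distrib[of _ n])
  then have "x \<bullet> x = 2 - 2 * v $ 0" using v n by simp
  then have "2 / (x \<bullet> x) * (x \<bullet> unit_vec n 0) = -1" unfolding x0 using xx by (simp add: field_simps)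
  then have "householder_mat n x *\<^sub>v unit_vec n 0 = unit_vec n 0 + x"
    unfolding householder_mat_mult_vec[OF xc unit_vec_carrier] using xc by (intro eq_vecI) auto
  then show ?thesis unfolding x_def using v by (intro eq_vecI) auto
qed

lemma householder_reflection_exists:
  fixes v :: "real vec"
  assumes v: "v \<in> carrier_vec n" "v \<bullet> v = 1" and n: "n > 0"
  obtains H where "H \<in> carrier_mat n n" "sym_mat H" "H * H = 1\<^sub>m n" "H *\<^sub>v unit_vec n 0 = v"
proof (cases "v - unit_vec n 0 = 0\<^sub>v n")
  case True
  have "v = unit_vec n 0"
  proof (rule eq_vecI)
    fix i assume i: "i < dim_vec (unit_vec n 0)"
    then have "(v - unit_vec n 0) $ i = 0" using True by simp
    then show "v $ i = unit_vec n 0 $ i" using v i by simp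
  qed (use v in simp)
  then show ?thesis by (intro that[of "1\<^sub>m n"]) (auto simp: sym_mat_def)
next
  case False
  have x: "v - unit_vec n 0 \<in> carrier_vec n" using v by simp
  show ?thesis
    using that[OF householder_mat_carrier[OF x] sym_householder_mat[OF x]
        householder_mat_involution[OF x False] householder_mat_unit_vec[OF v n False]] .
qed

lemma unit_eigenvector_exists:
  fixes A :: "real mat"
  assumes A: "A \<in> carrier_mat n n" and e: "eigenvalue A e"
  obtains v where "v \<in> carrier_vec n" "v \<bullet> v = 1" "A *\<^sub>v v = e \<cdot>\<^sub>v v"
proof -
  obtain v0 where v0: "v0 \<in> carrier_vec n" "v0 \<noteq> 0\<^sub>v n" and ev0: "A *\<^sub>v v0 = e \<cdot>\<^sub>v v0"
    using e A unfolding eigenvalue_def eigenvector_def by auto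
  have pos: "v0 \<bullet> v0 > 0" using scalar_prod_self_pos[OF v0] .
  define v where "v = (1 / sqrt (v0 \<bullet> v0)) \<cdot>\<^sub>v v0"
  have "v \<in> carrier_vec n" unfolding v_def using v0 by auto
  moreover have "v \<bullet> v = 1" unfolding v_def using v0 pos by (simp add: power2_eq_square[symmetric])
  moreover have "A *\<^sub>v v = e \<cdot>\<^sub>v v" unfolding v_def
    using mult_mat_vec[OF A v0(1)] ev0 by (simp add: smult_smult_assoc mult.commute)
  ultimately show ?thesis using that by blast
qed

lemma sym_mat_block_if_first_col_eigen:
  fixes B :: "real mat"
  assumes B: "B \<in> carrier_mat (Suc m) (Suc m)" "sym_mat B"
    and Be: "B *\<^sub>v unit_vec (Suc m) 0 = e \<cdot>\<^sub>v unit_vec (Suc m) 0"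
  defines "B' \<equiv> mat m m (\<lambda>(i, j). B $$ (Suc i, Suc j))"
  shows "sym_mat B'" "B = four_block_mat (mat 1 1 (\<lambda>_. e)) (0\<^sub>m 1 m) (0\<^sub>m m 1) B'"
proof -
  have Bs: "B\<^sup>T = B" using B(2) unfolding sym_mat_def .
  have col0: "B $$ (i, 0) = (if i = 0 then e else 0)" if "i < Suc m" for i
    using arg_cong[OF Be, of "\<lambda>w. w $ i"] mult_unit_vec_eq_col[OF B(1), of 0] B that by simp
  have row0: "B $$ (0, j) = (if j = 0 then e else 0)" if "j < Suc m" for j
    using col0[OF that] arg_cong[OF Bs, of "\<lambda>X. X $$ (j, 0)"] B that by simp
  show "sym_mat B'" unfolding B'_def sym_mat_def
  proof (rule eq_matI)
    fix i j assume "i < dim_row (mat m m (\<lambda>(i, j). B $$ (Suc i, Suc j)))"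
      "j < dim_col (mat m m (\<lambda>(i, j). B $$ (Suc i, Suc j)))"
    then show "(mat m m (\<lambda>(i, j). B $$ (Suc i, Suc j)))\<^sup>T $$ (i, j) =
        mat m m (\<lambda>(i, j). B $$ (Suc i, Suc j)) $$ (i, j)"
      using arg_cong[OF Bs, of "\<lambda>X. X $$ (Suc i, Suc j)"] B by simp
  qed auto
  show "B = four_block_mat (mat 1 1 (\<lambda>_. e)) (0\<^sub>m 1 m) (0\<^sub>m m 1) B'"
  proof (rule eq_matI)
    fix i j assume "i < dim_row (four_block_mat (mat 1 1 (\<lambda>_. e)) (0\<^sub>m 1 m) (0\<^sub>m m 1) B')"
      "j < dim_col (four_block_mat (mat 1 1 (\<lambda>_. e)) (0\<^sub>m 1 m) (0\<^sub>m m 1) B')"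
    then have ij: "i < Suc m" "j < Suc m" by (auto simp: B'_def)
    show "B $$ (i, j) = four_block_mat (mat 1 1 (\<lambda>_. e)) (0\<^sub>m 1 m) (0\<^sub>m m 1) B' $$ (i, j)"
    proof (cases "i = 0 \<or> j = 0")
      case True
      then show ?thesis using ij row0 col0 by (auto simp: B'_def)
    next
      case False
      then obtain i' j' where "i = Suc i'" "j = Suc j'" by (metis not0_implies_Suc)
      then show ?thesis using ij by (auto simp: B'_def)
    qed
  qed (use B in \<open>auto simp: B'_def\<close>)
qed

lemma householder_deflation:
  fixes A :: "real mat"
  assumes A: "A \<in> carrier_mat (Suc m) (Suc m)" "sym_mat A" and e: "eigenvalue A e"
  obtains H A' where "H \<in> carrier_mat (Suc m) (Suc m)" "sym_mat H" "H * H = 1\<^sub>m (Suc m)"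
    "A' \<in> carrier_mat m m" "sym_mat A'"
    "H * A * H = four_block_mat (mat 1 1 (\<lambda>_. e)) (0\<^sub>m 1 m) (0\<^sub>m m 1) A'"
proof -
  obtain v where v: "v \<in> carrier_vec (Suc m)" "v \<bullet> v = 1" and ev: "A *\<^sub>v v = e \<cdot>\<^sub>v v"
    using unit_eigenvector_exists[OF A(1) e] by blast
  obtain H where H: "H \<in> carrier_mat (Suc m) (Suc m)" "sym_mat H"
    and HH: "H * H = 1\<^sub>m (Suc m)" and He: "H *\<^sub>v unit_vec (Suc m) 0 = v"
    using householder_reflection_exists[OF v] by auto
  have "H * A * H = H * A * H\<^sup>T" using H(2) unfolding sym_mat_def by simp
  then have B: "H * A * H \<in> carrier_mat (Suc m) (Suc m)" "sym_mat (H * A * H)"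
    using sym_mat_congruence[OF H(1) A] H A by auto
  have "(H * A * H) *\<^sub>v unit_vec (Suc m) 0 = H *\<^sub>v (A *\<^sub>v v)"
    unfolding He[symmetric] using H A by (simp add: assoc_mult_mat_vec[of _ "Suc m" "Suc m" _ "Suc m"])
  also have "\<dots> = e \<cdot>\<^sub>v (H *\<^sub>v v)" unfolding ev by (rule mult_mat_vec[OF H(1) v(1)])
  also have "H *\<^sub>v v = unit_vec (Suc m) 0"
    unfolding He[symmetric] using H HH by (simp flip: assoc_mult_mat_vec[OF H(1) H(1)])
  finally have "(H * A * H) *\<^sub>v unit_vec (Suc m) 0 = e \<cdot>\<^sub>v unit_vec (Suc m) 0" .
  from sym_mat_block_if_first_col_eigen[OF B this] show ?thesis by (intro that[OF H HH]) auto
qed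

lemma orthogonal_mat_mult:
  fixes U V :: "real mat"
  assumes U: "U \<in> carrier_mat n n" "U\<^sup>T * U = 1\<^sub>m n" "U * U\<^sup>T = 1\<^sub>m n"
    and V: "V \<in> carrier_mat n n" "V\<^sup>T * V = 1\<^sub>m n" "V * V\<^sup>T = 1\<^sub>m n"
  shows "(U * V)\<^sup>T * (U * V) = 1\<^sub>m n" "(U * V) * (U * V)\<^sup>T = 1\<^sub>m n"
proof -
  have t: "(U * V)\<^sup>T = V\<^sup>T * U\<^sup>T" using transpose_mult[OF U(1) V(1)] .
  have "(U * V)\<^sup>T * (U * V) = V\<^sup>T * (U\<^sup>T * U) * V"
    unfolding t using U(1) V(1) by (simp add: assoc_mult_mat[of _ n n _ n _ n])
  also have "\<dots> = 1\<^sub>m n" unfolding U(2) using V by simp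
  finally show "(U * V)\<^sup>T * (U * V) = 1\<^sub>m n" .
  have "(U * V) * (U * V)\<^sup>T = U * (V * V\<^sup>T) * U\<^sup>T"
    unfolding t using U(1) V(1) by (simp add: assoc_mult_mat[of _ n n _ n _ n])
  also have "\<dots> = 1\<^sub>m n" unfolding V(3) using U by simp
  finally show "(U * V) * (U * V)\<^sup>T = 1\<^sub>m n" .
qed

lemma orthogonal_block_diag_extension:
  fixes U' D' :: "real mat"
  assumes U': "U' \<in> carrier_mat m m" "U'\<^sup>T * U' = 1\<^sub>m m" "U' * U'\<^sup>T = 1\<^sub>m m"
    and D': "D' \<in> carrier_mat m m"
  defines "U \<equiv> four_block_mat (1\<^sub>m 1) (0\<^sub>m 1 m) (0\<^sub>m m 1) U'"
  shows "U \<in> carrier_mat (Suc m) (Suc m)" "U\<^sup>T * U = 1\<^sub>m (Suc m)" "U * U\<^sup>T = 1\<^sub>m (Suc m)"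
    "U * four_block_mat (mat 1 1 (\<lambda>_. e)) (0\<^sub>m 1 m) (0\<^sub>m m 1) D' * U\<^sup>T =
      four_block_mat (mat 1 1 (\<lambda>_. e)) (0\<^sub>m 1 m) (0\<^sub>m m 1) (U' * D' * U'\<^sup>T)"
proof -
  have Ut: "U\<^sup>T = four_block_mat (1\<^sub>m 1) (0\<^sub>m 1 m) (0\<^sub>m m 1) U'\<^sup>T"
    unfolding U_def by (subst transpose_four_block_mat[of _ 1 1 _ m _ m U']) (use U' in auto)
  show "U \<in> carrier_mat (Suc m) (Suc m)" unfolding U_def using U' by auto
  show "U\<^sup>T * U = 1\<^sub>m (Suc m)" "U * U\<^sup>T = 1\<^sub>m (Suc m)"
    unfolding Ut unfolding U_def
    by (subst mult_four_block_mat[of _ 1 1 _ m _ m _ _ 1 _ m]; use U' four_block_one_mat[of 1 m] in simp)+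
  show "U * four_block_mat (mat 1 1 (\<lambda>_. e)) (0\<^sub>m 1 m) (0\<^sub>m m 1) D' * U\<^sup>T =
      four_block_mat (mat 1 1 (\<lambda>_. e)) (0\<^sub>m 1 m) (0\<^sub>m m 1) (U' * D' * U'\<^sup>T)"
    unfolding Ut unfolding U_def
    by (subst mult_four_block_mat[of _ 1 1 _ m _ m _ _ 1 _ m], use U' D' in simp_all)+
qed

lemma sym_mat_orthogonal_diagonalization:
  fixes A :: "real mat"
  assumes "A \<in> carrier_mat n n" "sym_mat A"
  shows "\<exists>U D. U \<in> carrier_mat n n \<and> D \<in> carrier_mat n n \<and> diagonal_mat D \<and>
    U\<^sup>T * U = 1\<^sub>m n \<and> U * U\<^sup>T = 1\<^sub>m n \<and> A = U * D * U\<^sup>T"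
  using assms
proof (induction n arbitrary: A)
  case 0
  then show ?case by (intro exI[of _ A]) (auto simp: diagonal_mat_def)
next
  case (Suc m A)
  let ?n = "Suc m"
  have A: "A \<in> carrier_mat ?n ?n" using Suc by auto
  obtain e where "eigenvalue A e" using sym_mat_real_eigenvalue_exists[OF A Suc.prems(2)] by auto
  then obtain H A' where H: "H \<in> carrier_mat ?n ?n" "sym_mat H" and HH: "H * H = 1\<^sub>m ?n"
    and A': "A' \<in> carrier_mat m m" "sym_mat A'"
    and HAH: "H * A * H = four_block_mat (mat 1 1 (\<lambda>_. e)) (0\<^sub>m 1 m) (0\<^sub>m m 1) A'"
    using householder_deflation[OF A Suc.prems(2)] by metis
  obtain U' D' where U': "U' \<in> carrier_mat m m" "U'\<^sup>T * U' = 1\<^sub>m m" "U' * U'\<^sup>T = 1\<^sub>m m"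
    and D': "D' \<in> carrier_mat m m" "diagonal_mat D'" and A'eq: "A' = U' * D' * U'\<^sup>T"
    using Suc.IH[OF A'] by auto
  define U1 where "U1 = four_block_mat (1\<^sub>m 1) (0\<^sub>m 1 m) (0\<^sub>m m 1) U'"
  define D where "D = four_block_mat (mat 1 1 (\<lambda>_. e)) (0\<^sub>m 1 m) (0\<^sub>m m 1) D'"
  note U1 = orthogonal_block_diag_extension[OF U' D'(1), folded U1_def]
  have Ht: "H\<^sup>T = H" using H(2) unfolding sym_mat_def .
  note U = orthogonal_mat_mult[OF H(1) _ _ U1(1-3), unfolded Ht, OF HH HH]
  have D: "D \<in> carrier_mat ?n ?n" "diagonal_mat D"
    using D' unfolding D_def diagonal_mat_def by auto
  have "(H * U1) * D * (H * U1)\<^sup>T = H * (U1 * D * U1\<^sup>T) * H"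
    using H U1 D transpose_mult[OF H(1) U1(1)] Ht by (simp add: assoc_mult_mat[of _ ?n ?n _ ?n _ ?n])
  also have "\<dots> = (H * H) * A * (H * H)"
    unfolding U1(4)[of e, folded D_def] A'eq[symmetric] HAH[symmetric] using H A by (simp add: assoc_mult_mat[of _ ?n ?n _ ?n _ ?n])
  finally have "A = (H * U1) * D * (H * U1)\<^sup>T" using HH A by simp
  then show ?case using U D H U1 by (intro exI[of _ "H * U1"] exI[of _ D]) auto
qed

lemma eigenvalue_orthogonal_diagonalization:
  fixes A :: "real mat"
  assumes U: "U \<in> carrier_mat n n" "U\<^sup>T * U = 1\<^sub>m n"
    and D: "D \<in> carrier_mat n n" "diagonal_mat D" and A: "A = U * D * U\<^sup>T" and k: "k < n"
  shows "eigenvalue A (D $$ (k, k))"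
proof -
  let ?e = "unit_vec n k :: real vec"
  have UT: "U\<^sup>T \<in> carrier_mat n n" using U by simp
  have UtU: "U\<^sup>T *\<^sub>v (U *\<^sub>v ?e) = ?e"
    using U by (simp flip: assoc_mult_mat_vec[OF UT U(1) unit_vec_carrier])
  have nonzero: "U *\<^sub>v ?e \<noteq> 0\<^sub>v n"
  proof
    assume "U *\<^sub>v ?e = 0\<^sub>v n"
    then have "?e = U\<^sup>T *\<^sub>v 0\<^sub>v n" using UtU by simp
    also have "\<dots> = 0\<^sub>v n" using UT by (intro eq_vecI) auto
    finally show False using arg_cong[of _ _ "\<lambda>v. v $ k"] k by fastforce
  qed
  have "D *\<^sub>v ?e = D $$ (k, k) \<cdot>\<^sub>v ?e"
    using D k by (intro eq_vecI) (auto simp del: index_mult_mat_vec simp: diagonal_mult_vec_index)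
  then have "A *\<^sub>v (U *\<^sub>v ?e) = D $$ (k, k) \<cdot>\<^sub>v (U *\<^sub>v ?e)"
    unfolding A using U D UT UtU by (simp add: assoc_mult_mat_vec[of _ n n _ n] mult_mat_vec)
  then have "eigenvector A (U *\<^sub>v ?e) (D $$ (k, k))"
    unfolding eigenvector_def using A U D nonzero by auto
  then show ?thesis unfolding eigenvalue_def by blast
qed

lemma spectral_decomposition:
  fixes A :: "real mat"
  assumes "A \<in> carrier_mat n n" "sym_mat A"
  obtains U D where "U \<in> carrier_mat n n" "U\<^sup>T * U = 1\<^sub>m n" "U * U\<^sup>T = 1\<^sub>m n"
    "D \<in> carrier_mat n n" "diagonal_mat D" "A = U * D * U\<^sup>T"
    "\<And>k. k < n \<Longrightarrow> eigenvalue A (D $$ (k, k))"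
  using sym_mat_orthogonal_diagonalization[OF assms] eigenvalue_orthogonal_diagonalization
  by metis

lemma quad_form_orthogonal_diagonalization:
  fixes U D :: "real mat"
  assumes U: "U \<in> carrier_mat n n" "U * U\<^sup>T = 1\<^sub>m n"
    and D: "D \<in> carrier_mat n n" "diagonal_mat D" and v: "v \<in> carrier_vec n"
  shows "v \<bullet> (U * D * U\<^sup>T *\<^sub>v v) = (\<Sum>k<n. D $$ (k, k) * ((U\<^sup>T *\<^sub>v v) $ k)\<^sup>2)"
    and "v \<bullet> v = (\<Sum>k<n. ((U\<^sup>T *\<^sub>v v) $ k)\<^sup>2)"
proof -
  have UT: "U\<^sup>T \<in> carrier_mat n n" using U by simp
  have conj: "v \<bullet> (U * X * U\<^sup>T *\<^sub>v v) = (U\<^sup>T *\<^sub>v v) \<bullet> (X *\<^sub>v (U\<^sup>T *\<^sub>v v))"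
    if "X \<in> carrier_mat n n" for X
    using transpose_vec_mult_scalar[of U n n "X *\<^sub>v (U\<^sup>T *\<^sub>v v)" v] that U UT v
    by (simp add: assoc_mult_mat_vec[of _ n n _ n])
  show "v \<bullet> (U * D * U\<^sup>T *\<^sub>v v) = (\<Sum>k<n. D $$ (k, k) * ((U\<^sup>T *\<^sub>v v) $ k)\<^sup>2)"
    unfolding conj[OF D(1)] using D UT v by (simp add: diagonal_quad_form)
  have "U * 1\<^sub>m n * U\<^sup>T = 1\<^sub>m n" using U by simp
  then have "v \<bullet> v = v \<bullet> (U * 1\<^sub>m n * U\<^sup>T *\<^sub>v v)" using v by simp
  also have "\<dots> = (U\<^sup>T *\<^sub>v v) \<bullet> (U\<^sup>T *\<^sub>v v)"
    unfolding conj[OF one_carrier_mat] using UT v by simp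
  finally show "v \<bullet> v = (\<Sum>k<n. ((U\<^sup>T *\<^sub>v v) $ k)\<^sup>2)"
    unfolding scalar_prod_self_eq_sum[OF mult_mat_vec_carrier[OF UT v]] .
qed

lemma sym_mat_quad_form_bounds:
  fixes A :: "real mat"
  assumes A: "A \<in> carrier_mat n n" "sym_mat A"
    and ev: "\<And>e. eigenvalue A e \<Longrightarrow> a \<le> e \<and> e \<le> b" and v: "v \<in> carrier_vec n"
  shows "a * (v \<bullet> v) \<le> v \<bullet> (A *\<^sub>v v)" "v \<bullet> (A *\<^sub>v v) \<le> b * (v \<bullet> v)"
proof -
  obtain U D where U: "U \<in> carrier_mat n n" "U * U\<^sup>T = 1\<^sub>m n"
    and D: "D \<in> carrier_mat n n" "diagonal_mat D" and AUD: "A = U * D * U\<^sup>T"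
    and eig: "\<And>k. k < n \<Longrightarrow> eigenvalue A (D $$ (k, k))"
    using spectral_decomposition[OF A] by metis
  note quad = quad_form_orthogonal_diagonalization[OF U D v]
  show "a * (v \<bullet> v) \<le> v \<bullet> (A *\<^sub>v v)"
    unfolding AUD quad sum_distrib_left using ev[OF eig] by (intro sum_mono mult_right_mono) auto
  show "v \<bullet> (A *\<^sub>v v) \<le> b * (v \<bullet> v)"
    unfolding AUD quad sum_distrib_left using ev[OF eig] by (intro sum_mono mult_right_mono) auto
qed

lemma sym_mat_eq_zero_if_eigenvalues_zero:
  fixes A :: "real mat"
  assumes A: "A \<in> carrier_mat n n" "sym_mat A" and ev: "\<And>e. eigenvalue A e \<Longrightarrow> e = 0"
  shows "A = 0\<^sub>m n n"
proof -
  obtain U D where U: "U \<in> carrier_mat n n" and D: "D \<in> carrier_mat n n" "diagonal_mat D"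
    and AUD: "A = U * D * U\<^sup>T" and eig: "\<And>k. k < n \<Longrightarrow> eigenvalue A (D $$ (k, k))"
    using spectral_decomposition[OF A] by metis
  have "D = 0\<^sub>m n n"
  proof (rule eq_matI)
    fix i j assume "i < dim_row (0\<^sub>m n n :: real mat)" "j < dim_col (0\<^sub>m n n :: real mat)"
    then show "D $$ (i, j) = 0\<^sub>m n n $$ (i, j)"
      using D ev[OF eig] unfolding diagonal_mat_def by (cases "i = j") auto
  qed (use D in auto)
  then show ?thesis unfolding AUD using U by simp
qed

section \<open>Positive definite square roots\<close>

lemma eigenvalue_pos_def_mat_pos:
  assumes "pos_def_mat A" "eigenvalue A e"
  shows "e > 0"
proof -
  obtain v where v: "v \<in> carrier_vec (dim_row A)" "v \<noteq> 0\<^sub>v (dim_row A)" and Av: "A *\<^sub>v v = e \<cdot>\<^sub>v v"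
    using assms unfolding eigenvalue_def eigenvector_def pos_def_mat_def by auto
  have "0 < v \<bullet> (A *\<^sub>v v)" using assms(1) v unfolding pos_def_mat_def by blast
  also have "\<dots> = e * (v \<bullet> v)" unfolding Av using v by simp
  finally show ?thesis using scalar_prod_self_nonneg[of v] by (simp add: zero_less_mult_iff)
qed

lemma pos_def_mat_if_eigenvalues_pos:
  fixes \<Sigma> :: "real mat"
  assumes \<Sigma>: "\<Sigma> \<in> carrier_mat p p" "sym_mat \<Sigma>"
    and ev: "\<And>e. eigenvalue \<Sigma> e \<Longrightarrow> h1 \<le> e \<and> e \<le> h2" and h1: "h1 > 0"
  shows "pos_def_mat \<Sigma>"
proof -
  have "0 < v \<bullet> (\<Sigma> *\<^sub>v v)" if "v \<in> carrier_vec p" "v \<noteq> 0\<^sub>v p" for v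
    using sym_mat_quad_form_bounds(1)[OF \<Sigma> ev that(1)] scalar_prod_self_pos[OF that] h1
    by (meson less_le_trans mult_pos_pos)
  then show ?thesis using \<Sigma> unfolding pos_def_mat_def by auto
qed

lemma pos_def_mat_minv:
  fixes A :: "real mat"
  assumes A: "A \<in> carrier_mat n n" "pos_def_mat A"
  shows "minv A \<in> carrier_mat n n" "pos_def_mat (minv A)"
proof -
  have sym: "sym_mat A"
    and pos: "\<And>v. v \<in> carrier_vec n \<Longrightarrow> v \<noteq> 0\<^sub>v n \<Longrightarrow> 0 < v \<bullet> (A *\<^sub>v v)"
    using A unfolding pos_def_mat_def by auto
  note inv = minv_correct[OF A(1) det_nonzero_if_quad_form_pos[OF A(1) pos]]
  have "0 < v \<bullet> (minv A *\<^sub>v v)" if v: "v \<in> carrier_vec n" "v \<noteq> 0\<^sub>v n" for v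
  proof -
    define y where "y = minv A *\<^sub>v v"
    have y: "y \<in> carrier_vec n" unfolding y_def using inv(1) v by simp
    have Ay: "A *\<^sub>v y = v" unfolding y_def using A inv v by (simp flip: assoc_mult_mat_vec)
    then have "y \<noteq> 0\<^sub>v n" using A v by auto
    then have "0 < y \<bullet> (A *\<^sub>v y)" using pos y by blast
    also have "\<dots> = v \<bullet> y" using Ay comm_scalar_prod[OF y v(1)] by simp
    finally show ?thesis unfolding y_def .
  qed
  then show "minv A \<in> carrier_mat n n" "pos_def_mat (minv A)"
    using inv sym_mat_right_inverse[OF A(1) sym inv(1,2)] unfolding pos_def_mat_def by auto
qed

lemma orthogonal_conj_mult:
  fixes U X Y :: "real mat"
  assumes U: "U \<in> carrier_mat n n" "U\<^sup>T * U = 1\<^sub>m n" and X: "X \<in> carrier_mat n n"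
    and Y: "Y \<in> carrier_mat n n"
  shows "(U * X * U\<^sup>T) * (U * Y * U\<^sup>T) = U * (X * Y) * U\<^sup>T"
proof -
  have UT: "U\<^sup>T \<in> carrier_mat n n" using U by simp
  have "(U * X * U\<^sup>T) * (U * Y * U\<^sup>T) = U * X * (U\<^sup>T * U) * Y * U\<^sup>T"
    using U(1) X Y UT by (simp add: assoc_mult_mat[of _ n n _ n _ n])
  also have "\<dots> = U * (X * Y) * U\<^sup>T"
    unfolding U(2) using U(1) X Y UT by (simp add: assoc_mult_mat[of _ n n _ n _ n])
  finally show ?thesis .
qed

lemma pos_def_mat_orthogonal_conj_diagonal:
  fixes U D :: "real mat"
  assumes U: "U \<in> carrier_mat n n" "U * U\<^sup>T = 1\<^sub>m n"
    and D: "D \<in> carrier_mat n n" "diagonal_mat D" and pos: "\<And>k. k < n \<Longrightarrow> D $$ (k, k) > 0"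
  shows "pos_def_mat (U * D * U\<^sup>T)"
proof -
  have "0 < v \<bullet> (U * D * U\<^sup>T *\<^sub>v v)" if v: "v \<in> carrier_vec n" "v \<noteq> 0\<^sub>v n" for v
  proof -
    let ?y = "U\<^sup>T *\<^sub>v v"
    note quad = quad_form_orthogonal_diagonalization[OF U D v(1)]
    have "\<exists>k<n. ?y $ k \<noteq> 0"
    proof (rule ccontr)
      assume "\<not> ?thesis"
      then have "v \<bullet> v = 0" unfolding quad(2) by simp
      with scalar_prod_self_pos[OF v] show False by simp
    qed
    then obtain k where k: "k < n" "?y $ k \<noteq> 0" by blast
    have "0 < D $$ (k, k) * (?y $ k)\<^sup>2" using k pos by simp
    also have "\<dots> \<le> (\<Sum>k<n. D $$ (k, k) * (?y $ k)\<^sup>2)"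
      by (rule member_le_sum) (use k pos in \<open>auto simp: less_imp_le\<close>)
    finally show ?thesis unfolding quad(1) .
  qed
  then show ?thesis
    using U D sym_mat_congruence[OF U(1) D(1) diagonal_mat_sym[OF D]] unfolding pos_def_mat_def by auto
qed

lemma pos_def_mat_sqrt_exists:
  fixes X :: "real mat"
  assumes X: "X \<in> carrier_mat n n" "pos_def_mat X"
  shows "\<exists>R. R \<in> carrier_mat n n \<and> pos_def_mat R \<and> R * R = X"
proof -
  obtain U D where U: "U \<in> carrier_mat n n" "U\<^sup>T * U = 1\<^sub>m n" "U * U\<^sup>T = 1\<^sub>m n"
    and D: "D \<in> carrier_mat n n" "diagonal_mat D" and XUD: "X = U * D * U\<^sup>T"
    and eig: "\<And>k. k < n \<Longrightarrow> eigenvalue X (D $$ (k, k))"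
    using spectral_decomposition[OF X(1)] X(2) unfolding pos_def_mat_def by metis
  have pos: "D $$ (k, k) > 0" if "k < n" for k
    using eigenvalue_pos_def_mat_pos[OF X(2) eig[OF that]] .
  define Dh where "Dh = mat n n (\<lambda>(i, j). if i = j then sqrt (D $$ (i, i)) else 0)"
  have Dh: "Dh \<in> carrier_mat n n" "diagonal_mat Dh" unfolding Dh_def diagonal_mat_def by auto
  have "Dh * Dh = D"
  proof (rule eq_matI)
    fix i j assume "i < dim_row D" "j < dim_col D"
    then have ij: "i < n" "j < n" using D by auto
    have "(Dh * Dh) $$ (i, j) = Dh $$ (i, i) * Dh $$ (i, j)"
      by (rule diagonal_mult_mat_index[OF Dh Dh(1) ij])
    then show "(Dh * Dh) $$ (i, j) = D $$ (i, j)"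
      using D pos[OF ij(1)] ij unfolding Dh_def diagonal_mat_def by (cases "i = j") auto
  qed (use D Dh in auto)
  then have "(U * Dh * U\<^sup>T) * (U * Dh * U\<^sup>T) = X"
    unfolding XUD using orthogonal_conj_mult[OF U(1,2) Dh(1) Dh(1)] by simp
  moreover have "pos_def_mat (U * Dh * U\<^sup>T)"
    using pos_def_mat_orthogonal_conj_diagonal[OF U(1,3) Dh] pos unfolding Dh_def by simp
  moreover have "U * Dh * U\<^sup>T \<in> carrier_mat n n" using U Dh by simp
  ultimately show ?thesis by blast
qed

lemma eigenvalue_diff_pos_def_sqrts:
  fixes R1 R2 :: "real mat"
  assumes R1: "R1 \<in> carrier_mat n n" "pos_def_mat R1" and R2: "R2 \<in> carrier_mat n n" "pos_def_mat R2"
    and eq: "R1 * R1 = R2 * R2" and ev: "eigenvalue (R1 - R2) e"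
  shows "e = 0"
proof -
  have sym: "sym_mat R1" "sym_mat R2"
    and pos1: "\<And>v. v \<in> carrier_vec n \<Longrightarrow> v \<noteq> 0\<^sub>v n \<Longrightarrow> 0 < v \<bullet> (R1 *\<^sub>v v)"
    and pos2: "\<And>v. v \<in> carrier_vec n \<Longrightarrow> v \<noteq> 0\<^sub>v n \<Longrightarrow> 0 < v \<bullet> (R2 *\<^sub>v v)"
    using R1 R2 unfolding pos_def_mat_def by auto
  obtain w where w: "w \<in> carrier_vec n" "w \<noteq> 0\<^sub>v n" and Dw: "(R1 - R2) *\<^sub>v w = e \<cdot>\<^sub>v w"
    using ev R2 unfolding eigenvalue_def eigenvector_def by auto
  txt \<open>With \<open>a = R1 w\<close> and \<open>b = R2 w\<close>: \<open>e w = a - b\<close> and \<open>R1 a = R2 b\<close>, so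
    \<open>e (w \<bullet> a + w \<bullet> b) = (a \<bullet> a - a \<bullet> b) + (b \<bullet> a - b \<bullet> b) = 0\<close>.\<close>
  define a where "a = R1 *\<^sub>v w"
  define b where "b = R2 *\<^sub>v w"
  have a: "a \<in> carrier_vec n" and b: "b \<in> carrier_vec n" unfolding a_def b_def using R1 R2 w by auto
  have ew: "e \<cdot>\<^sub>v w = a - b" unfolding Dw[symmetric] a_def b_def
    by (rule minus_mult_distrib_mat_vec[OF R1(1) R2(1) w(1)])
  have swap: "w \<bullet> (R *\<^sub>v x) = (R *\<^sub>v w) \<bullet> x"
    if "R \<in> carrier_mat n n" "sym_mat R" "x \<in> carrier_vec n" for R x
    using sym_mat_scalar_prod_swap[OF that(1,2) w(1) that(3)] .
  have "e * (w \<bullet> a) = w \<bullet> (R1 *\<^sub>v (e \<cdot>\<^sub>v w))" unfolding a_def using R1 w by (simp add: mult_mat_vec)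
  also have "\<dots> = a \<bullet> a - a \<bullet> b" unfolding ew
    using R1 a b w swap[OF R1(1) sym(1)] unfolding a_def
    by (simp add: mult_minus_distrib_mat_vec scalar_prod_minus_distrib[of _ n])
  finally have q1: "e * (w \<bullet> a) = a \<bullet> a - a \<bullet> b" .
  have "e * (w \<bullet> b) = w \<bullet> (R2 *\<^sub>v (e \<cdot>\<^sub>v w))" unfolding b_def using R2 w by (simp add: mult_mat_vec)
  also have "\<dots> = b \<bullet> a - b \<bullet> b" unfolding ew
    using R2 a b w swap[OF R2(1) sym(2)] unfolding b_def
    by (simp add: mult_minus_distrib_mat_vec scalar_prod_minus_distrib[of _ n])
  finally have q2: "e * (w \<bullet> b) = b \<bullet> a - b \<bullet> b" .
  have "a \<bullet> a = w \<bullet> (R1 *\<^sub>v a)" using swap[OF R1(1) sym(1) a] unfolding a_def by simp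
  also have "\<dots> = w \<bullet> (R2 *\<^sub>v b)"
    unfolding a_def b_def using arg_cong[OF eq, of "\<lambda>M. M *\<^sub>v w"] R1 R2 w by simp
  also have "\<dots> = b \<bullet> b" using swap[OF R2(1) sym(2) b] unfolding b_def by simp
  finally have "e * (w \<bullet> a + w \<bullet> b) = 0"
    using q1 q2 comm_scalar_prod[OF a b] by (simp add: distrib_left)
  moreover have "w \<bullet> a + w \<bullet> b > 0" using pos1[OF w] pos2[OF w] unfolding a_def b_def by simp
  ultimately show "e = 0" by simp
qed

lemma pos_def_mat_sqrt_unique:
  fixes R1 R2 :: "real mat"
  assumes R1: "R1 \<in> carrier_mat n n" "pos_def_mat R1" and R2: "R2 \<in> carrier_mat n n" "pos_def_mat R2"
    and eq: "R1 * R1 = R2 * R2"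
  shows "R1 = R2"
proof -
  have "sym_mat (R1 - R2)"
    using R1 R2 unfolding pos_def_mat_def sym_mat_def by (simp add: transpose_minus[of _ n n])
  then have "R1 - R2 = 0\<^sub>m n n"
    using sym_mat_eq_zero_if_eigenvalues_zero[OF minus_carrier_mat[OF R2(1)]]
      eigenvalue_diff_pos_def_sqrts[OF R1 R2 eq] by blast
  show ?thesis
  proof (rule eq_matI)
    fix i j assume "i < dim_row R2" "j < dim_col R2"
    then have "(R1 - R2) $$ (i, j) = 0" "i < n" "j < n" using \<open>R1 - R2 = 0\<^sub>m n n\<close> R2 by auto
    then show "R1 $$ (i, j) = R2 $$ (i, j)" using R1 R2 by simp
  qed (use R1 R2 in auto)
qed

lemma inv_sqrt_mat:
  assumes S: "\<Sigma> \<in> carrier_mat n n" "pos_def_mat \<Sigma>"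
  shows "inv_sqrt_mat \<Sigma> \<in> carrier_mat n n" "pos_def_mat (inv_sqrt_mat \<Sigma>)"
    "inv_sqrt_mat \<Sigma> * inv_sqrt_mat \<Sigma> = minv \<Sigma>"
proof -
  let ?P = "\<lambda>R. R \<in> carrier_mat n n \<and> pos_def_mat R \<and> R * R = minv \<Sigma>"
  obtain R where R: "?P R" using pos_def_mat_sqrt_exists[OF pos_def_mat_minv[OF S]] by blast
  have "\<exists>!R. ?P R"
  proof (rule ex1I[of _ R])
    fix R' assume "?P R'"
    then show "R' = R" using pos_def_mat_sqrt_unique[of R' n R] R by auto
  qed (rule R)
  from theI'[OF this] show "inv_sqrt_mat \<Sigma> \<in> carrier_mat n n" "pos_def_mat (inv_sqrt_mat \<Sigma>)"
    "inv_sqrt_mat \<Sigma> * inv_sqrt_mat \<Sigma> = minv \<Sigma>"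
    unfolding inv_sqrt_mat_def using S(1) by auto
qed

lemma inv_sqrt_mat_norm_bounds:
  fixes \<Sigma> :: "real mat"
  assumes \<Sigma>: "\<Sigma> \<in> carrier_mat p p" "sym_mat \<Sigma>"
    and ev: "\<And>e. eigenvalue \<Sigma> e \<Longrightarrow> h1 \<le> e \<and> e \<le> h2" and h1: "h1 > 0"
    and v: "v \<in> carrier_vec p"
  shows "v \<bullet> v / h2 \<le> (inv_sqrt_mat \<Sigma> *\<^sub>v v) \<bullet> (inv_sqrt_mat \<Sigma> *\<^sub>v v)"
    "(inv_sqrt_mat \<Sigma> *\<^sub>v v) \<bullet> (inv_sqrt_mat \<Sigma> *\<^sub>v v) \<le> v \<bullet> v / h1"
proof -
  note pd = pos_def_mat_if_eigenvalues_pos[OF \<Sigma> ev h1]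
  note S = inv_sqrt_mat[OF \<Sigma>(1) pd]
  note inv = pos_def_mat_minv[OF \<Sigma>(1) pd]
  have "(inv_sqrt_mat \<Sigma> *\<^sub>v v) \<bullet> (inv_sqrt_mat \<Sigma> *\<^sub>v v) = v \<bullet> (minv \<Sigma> *\<^sub>v v)"
    using sym_mat_scalar_prod_swap[OF S(1) _ v, of "inv_sqrt_mat \<Sigma> *\<^sub>v v"] S v
    unfolding pos_def_mat_def by (simp flip: S(3))
  moreover have "1 / h2 \<le> \<mu> \<and> \<mu> \<le> 1 / h1" if "eigenvalue (minv \<Sigma>) \<mu>" for \<mu>
  proof -
    have AB: "\<Sigma> * minv \<Sigma> = 1\<^sub>m p"
      using minv_correct[OF \<Sigma>(1) det_nonzero_if_quad_form_pos] pd \<Sigma>(1) unfolding pos_def_mat_def by auto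
    note e = eigenvalue_inverse_mat[OF \<Sigma>(1) inv(1) AB that]
    have bounds: "h1 \<le> 1 / \<mu>" "1 / \<mu> \<le> h2" using ev[OF e(2)] by auto
    have "0 < 1 / \<mu>" using bounds h1 by linarith
    then show ?thesis
      using le_imp_inverse_le[OF bounds(1) h1] le_imp_inverse_le[OF bounds(2)]
      by (simp add: inverse_eq_divide)
  qed
  then have "1 / h2 * (v \<bullet> v) \<le> v \<bullet> (minv \<Sigma> *\<^sub>v v)"
      "v \<bullet> (minv \<Sigma> *\<^sub>v v) \<le> 1 / h1 * (v \<bullet> v)"
    using sym_mat_quad_form_bounds[OF inv(1) _ _ v] inv(2) unfolding pos_def_mat_def by blast+
  ultimately show "v \<bullet> v / h2 \<le> (inv_sqrt_mat \<Sigma> *\<^sub>v v) \<bullet> (inv_sqrt_mat \<Sigma> *\<^sub>v v)"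
    "(inv_sqrt_mat \<Sigma> *\<^sub>v v) \<bullet> (inv_sqrt_mat \<Sigma> *\<^sub>v v) \<le> v \<bullet> v / h1" by simp_all
qed

lemma congruence_diagonal_bounds:
  fixes S \<Lambda> :: "real mat"
  assumes S: "S \<in> carrier_mat p p" "sym_mat S"
    and S_lower: "\<And>v. v \<in> carrier_vec p \<Longrightarrow> a * (v \<bullet> v) \<le> (S *\<^sub>v v) \<bullet> (S *\<^sub>v v)"
    and S_upper: "\<And>v. v \<in> carrier_vec p \<Longrightarrow> (S *\<^sub>v v) \<bullet> (S *\<^sub>v v) \<le> b * (v \<bullet> v)"
    and \<Lambda>: "\<Lambda> \<in> carrier_mat p p" "diagonal_mat \<Lambda>"
    and \<Lambda>_bounds: "\<And>k. k < p \<Longrightarrow> lmin \<le> \<Lambda> $$ (k, k) \<and> \<Lambda> $$ (k, k) \<le> lmax"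
    and lmin: "0 \<le> lmin" "lmin \<le> lmax" and b: "0 \<le> b" and v: "v \<in> carrier_vec p"
  shows "lmin * a * (v \<bullet> v) \<le> v \<bullet> (S * \<Lambda> * S *\<^sub>v v)"
    "vec_norm (S * \<Lambda> * S *\<^sub>v v) \<le> lmax * b * vec_norm v"
proof -
  define y where "y = S *\<^sub>v v"
  have y: "y \<in> carrier_vec p" unfolding y_def using S v by simp
  have \<Lambda>y: "\<Lambda> *\<^sub>v y \<in> carrier_vec p" using \<Lambda> y by simp
  have SLSv: "S * \<Lambda> * S *\<^sub>v v = S *\<^sub>v (\<Lambda> *\<^sub>v y)"
    unfolding y_def using S \<Lambda> v by (simp add: assoc_mult_mat_vec[of _ p p _ p])
  have "v \<bullet> (S * \<Lambda> * S *\<^sub>v v) = y \<bullet> (\<Lambda> *\<^sub>v y)"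
    unfolding SLSv y_def using sym_mat_scalar_prod_swap[OF S v \<Lambda>y[unfolded y_def]] .
  also have "\<dots> = (\<Sum>k<p. \<Lambda> $$ (k, k) * (y $ k)\<^sup>2)" by (rule diagonal_quad_form[OF \<Lambda> y])
  also have "\<dots> \<ge> lmin * (y \<bullet> y)"
    unfolding scalar_prod_self_eq_sum[OF y] sum_distrib_left
    using \<Lambda>_bounds by (intro sum_mono mult_right_mono) auto
  finally show "lmin * a * (v \<bullet> v) \<le> v \<bullet> (S * \<Lambda> * S *\<^sub>v v)"
    using mult_left_mono[OF S_lower[OF v] lmin(1)] unfolding y_def by (simp add: mult.assoc)
  have "(\<Lambda> *\<^sub>v y) \<bullet> (\<Lambda> *\<^sub>v y) = (\<Sum>k<p. (\<Lambda> $$ (k, k))\<^sup>2 * (y $ k)\<^sup>2)"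
    by (rule diagonal_mult_vec_square_norm[OF \<Lambda> y])
  also have "\<dots> \<le> lmax\<^sup>2 * (y \<bullet> y)"
    unfolding scalar_prod_self_eq_sum[OF y] sum_distrib_left
    using \<Lambda>_bounds lmin by (intro sum_mono mult_right_mono power_mono) fastforce+
  finally have "b * ((\<Lambda> *\<^sub>v y) \<bullet> (\<Lambda> *\<^sub>v y)) \<le> b * (lmax\<^sup>2 * (b * (v \<bullet> v)))"
    using S_upper[OF v] b lmin unfolding y_def
    by (meson mult_left_mono order_trans zero_le_power2)
  then have "(vec_norm (S * \<Lambda> * S *\<^sub>v v))\<^sup>2 \<le> (lmax * b * vec_norm v)\<^sup>2"
    unfolding vec_norm_square SLSv power_mult_distrib
    using S_upper[OF \<Lambda>y] by (simp add: power2_eq_square mult_ac)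
  then show "vec_norm (S * \<Lambda> * S *\<^sub>v v) \<le> lmax * b * vec_norm v"
    by (rule power2_le_imp_le) (use lmin b vec_norm_nonneg in simp)
qed

lemma inv_sqrt_congruence_bounds:
  fixes \<Sigma> \<Lambda> :: "real mat"
  assumes \<Sigma>: "\<Sigma> \<in> carrier_mat p p" "sym_mat \<Sigma>"
    and ev: "\<And>e. eigenvalue \<Sigma> e \<Longrightarrow> h1 \<le> e \<and> e \<le> h2" and h1: "h1 > 0"
    and \<Lambda>: "\<Lambda> \<in> carrier_mat p p" "diagonal_mat \<Lambda>"
    and \<Lambda>_bounds: "\<And>k. k < p \<Longrightarrow> lmin \<le> \<Lambda> $$ (k, k) \<and> \<Lambda> $$ (k, k) \<le> lmax"
    and lmin: "0 < lmin" "lmin \<le> lmax"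
  defines "L \<equiv> inv_sqrt_mat \<Sigma> * \<Lambda> * inv_sqrt_mat \<Sigma>"
  shows "L \<in> carrier_mat p p" "sym_mat L"
    "\<And>v. v \<in> carrier_vec p \<Longrightarrow> lmin / h2 * (v \<bullet> v) \<le> v \<bullet> (L *\<^sub>v v)"
    "\<And>v. v \<in> carrier_vec p \<Longrightarrow> vec_norm (L *\<^sub>v v) \<le> lmax / h1 * vec_norm v"
proof -
  define S where "S = inv_sqrt_mat \<Sigma>"
  have S: "S \<in> carrier_mat p p" "sym_mat S"
    using inv_sqrt_mat(1,2)[OF \<Sigma>(1) pos_def_mat_if_eigenvalues_pos[OF \<Sigma> ev h1]]
    unfolding S_def pos_def_mat_def by auto
  note S_bounds = inv_sqrt_mat_norm_bounds[OF \<Sigma> ev h1, folded S_def]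
  have L_eq: "L = S * \<Lambda> * S" unfolding L_def S_def ..
  note bounds = congruence_diagonal_bounds[OF S, of "1 / h2" "1 / h1" \<Lambda> lmin lmax, folded L_eq]
  show "L \<in> carrier_mat p p" unfolding L_eq using S \<Lambda> by simp
  show "sym_mat L" unfolding L_eq
    using sym_mat_congruence[OF S(1) \<Lambda>(1) diagonal_mat_sym[OF \<Lambda>]] S(2) unfolding sym_mat_def by simp
  show "lmin / h2 * (v \<bullet> v) \<le> v \<bullet> (L *\<^sub>v v)" if "v \<in> carrier_vec p" for v
    using bounds(1) S_bounds \<Lambda> \<Lambda>_bounds lmin h1 that by (simp add: less_imp_le)
  show "vec_norm (L *\<^sub>v v) \<le> lmax / h1 * vec_norm v" if "v \<in> carrier_vec p" for v
    using bounds(2) S_bounds \<Lambda> \<Lambda>_bounds lmin h1 that by (simp add: less_imp_le)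
qed

section \<open>Rank-one updates of the resolvent\<close>

lemma abs_scalar_prod_mult_le:
  fixes L :: "real mat"
  assumes L: "L \<in> carrier_mat n n" "\<And>v. v \<in> carrier_vec n \<Longrightarrow> vec_norm (L *\<^sub>v v) \<le> C * vec_norm v"
    and x: "x \<in> carrier_vec n" and y: "y \<in> carrier_vec n"
  shows "\<bar>x \<bullet> (L *\<^sub>v y)\<bar> \<le> C * vec_norm x * vec_norm y"
proof -
  have "\<bar>x \<bullet> (L *\<^sub>v y)\<bar> \<le> vec_norm x * vec_norm (L *\<^sub>v y)"
    by (rule abs_scalar_prod_le_vec_norm[OF x mult_mat_vec_carrier[OF L(1) y]])
  also have "\<dots> \<le> vec_norm x * (C * vec_norm y)" by (rule mult_left_mono[OF L(2)[OF y] vec_norm_nonneg])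
  finally show ?thesis by (simp add: mult_ac)
qed

lemma sherman_morrison:
  fixes A N :: "real mat" and u :: "real vec"
  assumes A: "A \<in> carrier_mat n n" and N: "N \<in> carrier_mat n n" "sym_mat N" and AN: "A * N = 1\<^sub>m n"
    and u: "u \<in> carrier_vec n" and q: "1 + u \<bullet> (N *\<^sub>v u) \<noteq> 0"
  shows "(A + outer_prod u u) *
    (N - (1 / (1 + u \<bullet> (N *\<^sub>v u))) \<cdot>\<^sub>m outer_prod (N *\<^sub>v u) (N *\<^sub>v u)) = 1\<^sub>m n"
proof -
  define w where "w = N *\<^sub>v u"
  define k where "k = 1 / (1 + u \<bullet> w)"
  let ?P = "A + outer_prod u u" and ?Q = "N - k \<cdot>\<^sub>m outer_prod w w"
  have w: "w \<in> carrier_vec n" unfolding w_def using N u by simp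
  have P: "?P \<in> carrier_mat n n" using A u by (intro add_carrier_mat outer_prod_carrier)
  have Q: "?Q \<in> carrier_mat n n" using N w by (intro minus_carrier_mat smult_carrier_mat outer_prod_carrier)
  have Aw: "A *\<^sub>v w = u" unfolding w_def using A N AN u by (simp flip: assoc_mult_mat_vec[OF A N(1) u])
  have Pv: "?P *\<^sub>v v = A *\<^sub>v v + (u \<bullet> v) \<cdot>\<^sub>v u" if "v \<in> carrier_vec n" for v
    using A u that by (simp add: add_mult_distrib_mat_vec[of _ n n] outer_prod_mult_vec[of _ n])
  show "?P * ?Q = 1\<^sub>m n"
  proof (rule eq_matI_mult_vec[of _ n n])
    fix y :: "real vec" assume y: "y \<in> carrier_vec n"
    have Ny: "N *\<^sub>v y \<in> carrier_vec n" using N y by simp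
    have uNy: "u \<bullet> (N *\<^sub>v y) = w \<bullet> y" unfolding w_def using sym_mat_scalar_prod_swap[OF N u y] .
    have "k * (w \<bullet> y) * (1 + u \<bullet> w) = (k * (1 + u \<bullet> w)) * (w \<bullet> y)" by (simp only: mult_ac)
    also have "k * (1 + u \<bullet> w) = 1" unfolding k_def using q w_def by simp
    finally have kq: "k * (w \<bullet> y) * (1 + u \<bullet> w) = w \<bullet> y" by simp
    have "?Q *\<^sub>v y = N *\<^sub>v y - (k * (w \<bullet> y)) \<cdot>\<^sub>v w"
      using N w y by (simp add: minus_mult_distrib_mat_vec[of _ n n] mult_smult_mat_vec[of _ n n]
          outer_prod_mult_vec[of _ n] smult_smult_assoc)
    then have "?P * ?Q *\<^sub>v y = ?P *\<^sub>v (N *\<^sub>v y) - (k * (w \<bullet> y)) \<cdot>\<^sub>v (?P *\<^sub>v w)"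
      using P Q N w y by (simp add: mult_minus_distrib_mat_vec[of _ n n] mult_mat_vec[of _ n n])
    also have "\<dots> = y + (w \<bullet> y) \<cdot>\<^sub>v u - (k * (w \<bullet> y) * (1 + u \<bullet> w)) \<cdot>\<^sub>v u"
      unfolding Pv[OF Ny] Pv[OF w] Aw uNy using A N AN y u
      by (intro eq_vecI) (auto simp flip: assoc_mult_mat_vec simp: algebra_simps)
    also have "\<dots> = 1\<^sub>m n *\<^sub>v y" unfolding kq using y u by (intro eq_vecI) auto
    finally show "?P * ?Q *\<^sub>v y = 1\<^sub>m n *\<^sub>v y" .
  qed (use P Q in auto)
qed

lemma mtrace_inverse_sq_mult_diff:
  fixes N M A' A L :: "real mat"
  assumes carrier: "N \<in> carrier_mat n n" "M \<in> carrier_mat n n" "A' \<in> carrier_mat n n"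
    "A \<in> carrier_mat n n" "L \<in> carrier_mat n n"
    and inv: "N * A' = 1\<^sub>m n" "M * A = 1\<^sub>m n"
  shows "mtrace (N * N * (A' - L)) - mtrace (M * M * (A - L)) =
    mtrace (N - M) - mtrace ((N - M) * N * L) - mtrace (M * (N - M) * L)"
proof -
  have sq: "X * X * (B - L) = X - X * X * L"
    if "X \<in> carrier_mat n n" "B \<in> carrier_mat n n" "X * B = 1\<^sub>m n" for X B
    using that carrier by (simp add: mult_minus_distrib_mat[of _ n n] assoc_mult_mat[of _ n n _ n _ n])
  have NM: "N - M \<in> carrier_mat n n" using carrier(2) by (rule minus_carrier_mat)
  have factor: "N * N * L - M * M * L = (N - M) * N * L + M * (N - M) * L"
  proof (rule eq_matI_mult_vec[of _ n n])
    fix y :: "real vec" assume y: "y \<in> carrier_vec n"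
    define z where "z = L *\<^sub>v y"
    have z: "z \<in> carrier_vec n" unfolding z_def using carrier y by simp
    have "(N * N * L - M * M * L) *\<^sub>v y = N *\<^sub>v (N *\<^sub>v z) - M *\<^sub>v (M *\<^sub>v z)"
      unfolding z_def using carrier y
      by (simp add: minus_mult_distrib_mat_vec[of _ n n] assoc_mult_mat_vec[of _ n n _ n])
    moreover have "((N - M) * N * L + M * (N - M) * L) *\<^sub>v y =
        (N *\<^sub>v (N *\<^sub>v z) - M *\<^sub>v (N *\<^sub>v z)) + (M *\<^sub>v (N *\<^sub>v z) - M *\<^sub>v (M *\<^sub>v z))"
      unfolding z_def using carrier y NM
      by (simp add: assoc_mult_mat_vec[of _ n n _ n] add_mult_distrib_mat_vec[of _ n n]
          minus_mult_distrib_mat_vec[of _ n n] mult_minus_distrib_mat_vec[of _ n n])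
    ultimately show "(N * N * L - M * M * L) *\<^sub>v y = ((N - M) * N * L + M * (N - M) * L) *\<^sub>v y"
      using carrier z by (intro eq_vecI) auto
  next
    show "N * N * L - M * M * L \<in> carrier_mat n n"
      using carrier by (intro minus_carrier_mat mult_carrier_mat)
    show "(N - M) * N * L + M * (N - M) * L \<in> carrier_mat n n"
      using carrier NM by (intro add_carrier_mat mult_carrier_mat)
  qed
  have "mtrace (N * N * L) - mtrace (M * M * L) = mtrace ((N - M) * N * L) + mtrace (M * (N - M) * L)"
    using mtrace_minus[of "N * N * L" n "M * M * L"] mtrace_add[of "(N - M) * N * L" n "M * (N - M) * L"]
      carrier NM factor by simp
  then show ?thesis
    unfolding sq[OF carrier(1,3) inv(1)] sq[OF carrier(2,4) inv(2)]
    using carrier by (simp add: mtrace_minus[of _ n])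
qed

lemma mtrace_rank_one_update_eq:
  fixes A' N L :: "real mat" and u :: "real vec"
  assumes A': "A' \<in> carrier_mat n n" and N: "N \<in> carrier_mat n n" "sym_mat N"
    and inv: "A' * N = 1\<^sub>m n" "N * A' = 1\<^sub>m n" and L: "L \<in> carrier_mat n n" "sym_mat L"
    and u: "u \<in> carrier_vec n" and q: "1 + u \<bullet> (N *\<^sub>v u) \<noteq> 0"
  defines "w \<equiv> N *\<^sub>v u" and "M \<equiv> minv (A' + outer_prod u u)"
  shows "mtrace (N * N * (A' - L)) - mtrace (M * M * (A' + outer_prod u u - L)) =
    (w \<bullet> w - w \<bullet> (L *\<^sub>v (N *\<^sub>v w)) - (M *\<^sub>v w) \<bullet> (L *\<^sub>v w)) / (1 + u \<bullet> w)"
proof -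
  define k where "k = 1 / (1 + u \<bullet> w)"
  have w: "w \<in> carrier_vec n" unfolding w_def using N u by simp
  have ww: "outer_prod w w \<in> carrier_mat n n" using w by simp
  have A: "A' + outer_prod u u \<in> carrier_mat n n" using A' u by simp
  have Q: "N - k \<cdot>\<^sub>m outer_prod w w \<in> carrier_mat n n" using N ww by (intro minus_carrier_mat) simp
  have AQ: "(A' + outer_prod u u) * (N - k \<cdot>\<^sub>m outer_prod w w) = 1\<^sub>m n"
    unfolding k_def w_def by (rule sherman_morrison[OF A' N inv(1) u q])
  have M_eq: "M = N - k \<cdot>\<^sub>m outer_prod w w" unfolding M_def by (rule minv_eqI[OF A Q AQ])
  have M: "M \<in> carrier_mat n n" "M * (A' + outer_prod u u) = 1\<^sub>m n"
    unfolding M_eq using Q mat_mult_left_right_inverse[OF A Q AQ] by auto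
  have NM: "N - M = k \<cdot>\<^sub>m outer_prod w w" unfolding M_eq using N ww by (intro eq_matI) auto
  have "(N - M) * N * L = k \<cdot>\<^sub>m (outer_prod w w * (N * L))"
    unfolding NM using mult_smult_assoc_mat[OF ww N(1)] mult_smult_assoc_mat[OF mult_carrier_mat[OF ww N(1)] L(1)]
      ww N L by simp
  then have "mtrace ((N - M) * N * L) = k * (w \<bullet> ((N * L)\<^sup>T *\<^sub>v w))"
    using mtrace_smult[OF mult_carrier_mat[OF ww mult_carrier_mat[OF N(1) L(1)]]]
      mtrace_outer_prod_mult[OF mult_carrier_mat[OF N(1) L(1)] w w] by simp
  also have "(N * L)\<^sup>T = L * N" using L N transpose_mult[OF N(1) L(1)] unfolding sym_mat_def by simp
  finally have tr1: "mtrace ((N - M) * N * L) = k * (w \<bullet> (L *\<^sub>v (N *\<^sub>v w)))" using N L w by simp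
  have Mw: "M *\<^sub>v w \<in> carrier_vec n" using M w by simp
  have "M * (N - M) * L = k \<cdot>\<^sub>m (outer_prod (M *\<^sub>v w) w * L)"
    unfolding NM mult_smult_distrib[OF M(1) ww] mult_outer_prod[OF M(1) w w]
    by (rule mult_smult_assoc_mat[OF outer_prod_carrier[OF Mw w] L(1)])
  then have tr2: "mtrace (M * (N - M) * L) = k * ((M *\<^sub>v w) \<bullet> (L *\<^sub>v w))"
    using mtrace_smult[OF mult_carrier_mat[OF outer_prod_carrier[OF Mw w] L(1)]]
      mtrace_outer_prod_mult[OF L(1) Mw w] L(2) unfolding sym_mat_def by simp
  have "mtrace (N - M) = k * (w \<bullet> w)" unfolding NM using w ww by (simp add: mtrace_smult[of _ n] mtrace_outer_prod)
  then show ?thesis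
    using mtrace_inverse_sq_mult_diff[OF N(1) M(1) A' A L(1) inv(2) M(2)] tr1 tr2
    unfolding k_def by (simp add: diff_divide_distrib)
qed

lemma rank_one_trace_bound_arith:
  fixes s a b q c C :: real
  assumes c: "c > 0" and C: "C \<ge> 0" and s: "0 \<le> s" "c * s \<le> q"
    and a: "\<bar>a\<bar> \<le> C * s / c" and b: "\<bar>b\<bar> \<le> C * s / c"
  shows "\<bar>(s - a - b) / (1 + q)\<bar> \<le> 1 / c + 2 * C / c\<^sup>2"
proof -
  have "0 \<le> c * s" using c s by simp
  then have q: "0 < 1 + q" using s by linarith
  have "\<bar>s - a - b\<bar> \<le> s + 2 * (C * s / c)" using a b s unfolding abs_le_iff by linarith
  also have "\<dots> = s * (1 + 2 * C / c)" using c by (simp add: field_simps)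
  finally have "\<bar>s - a - b\<bar> \<le> s * (1 + 2 * C / c)" .
  then have "\<bar>(s - a - b) / (1 + q)\<bar> \<le> s / (1 + q) * (1 + 2 * C / c)"
    using divide_right_mono[of _ _ "1 + q"] q by (simp add: abs_divide)
  also have "\<dots> \<le> 1 / c * (1 + 2 * C / c)"
  proof (rule mult_right_mono)
    have "s \<le> (1 + q) / c" using s c by (simp add: le_divide_eq mult.commute)
    then show "s / (1 + q) \<le> 1 / c" using divide_right_mono[of _ _ "1 + q"] q by fastforce
  qed (use C c in simp)
  also have "\<dots> = 1 / c + 2 * C / c\<^sup>2" using c by (simp add: field_simps power2_eq_square)
  finally show ?thesis .
qed

lemma mtrace_rank_one_update_bound:
  fixes B L :: "real mat" and u :: "real vec"
  assumes B: "B \<in> carrier_mat n n" "sym_mat B" "\<And>v. v \<in> carrier_vec n \<Longrightarrow> 0 \<le> v \<bullet> (B *\<^sub>v v)"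
    and L: "L \<in> carrier_mat n n" "sym_mat L"
      "\<And>v. v \<in> carrier_vec n \<Longrightarrow> c * (v \<bullet> v) \<le> v \<bullet> (L *\<^sub>v v)"
      "\<And>v. v \<in> carrier_vec n \<Longrightarrow> vec_norm (L *\<^sub>v v) \<le> C * vec_norm v"
    and c: "c > 0" and C: "C \<ge> 0" and u: "u \<in> carrier_vec n"
  shows "\<bar>mtrace (minv (B + L) * minv (B + L) * B)
      - mtrace (minv (B + L + outer_prod u u) * minv (B + L + outer_prod u u) * (B + outer_prod u u))\<bar>
    \<le> 1 / c + 2 * C / c\<^sup>2"
proof -
  define A' where "A' = B + L"
  define A where "A = A' + outer_prod u u"
  have uu: "outer_prod u u \<in> carrier_mat n n" using u by simp
  have A': "A' \<in> carrier_mat n n" "sym_mat A'"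
    unfolding A'_def using B L by (auto simp: sym_mat_def transpose_add)
  have A: "A \<in> carrier_mat n n" unfolding A_def using A' uu by simp
  have coercive_A': "c * (v \<bullet> v) \<le> v \<bullet> (A' *\<^sub>v v)" if v: "v \<in> carrier_vec n" for v
    using quad_form_add[OF B(1) L(1) v] B(3)[OF v] L(3)[OF v] unfolding A'_def by linarith
  have coercive_A: "c * (v \<bullet> v) \<le> v \<bullet> (A *\<^sub>v v)" if v: "v \<in> carrier_vec n" for v
    using quad_form_add[OF A'(1) uu v] coercive_A'[OF v] quad_form_outer_prod[OF u v]
      zero_le_power2[of "u \<bullet> v"] unfolding A_def by linarith
  define N where "N = minv A'"
  define M where "M = minv A"
  have N: "N \<in> carrier_mat n n" "A' * N = 1\<^sub>m n" "N * A' = 1\<^sub>m n"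
      "\<And>x. x \<in> carrier_vec n \<Longrightarrow> vec_norm (N *\<^sub>v x) \<le> vec_norm x / c"
    unfolding N_def using minv_coercive[OF A'(1) _ c] coercive_A' by blast+
  have M: "M \<in> carrier_mat n n" "A * M = 1\<^sub>m n" "M * A = 1\<^sub>m n"
      "\<And>x. x \<in> carrier_vec n \<Longrightarrow> vec_norm (M *\<^sub>v x) \<le> vec_norm x / c"
    unfolding M_def using minv_coercive[OF A _ c] coercive_A by blast+
  define w where "w = N *\<^sub>v u"
  have w: "w \<in> carrier_vec n" unfolding w_def using N u by simp
  have "u = A' *\<^sub>v w" unfolding w_def using A' N u by (simp flip: assoc_mult_mat_vec[OF A'(1) N(1) u])
  then have q: "c * (w \<bullet> w) \<le> u \<bullet> w"
    using coercive_A'[OF w] comm_scalar_prod[OF w mult_mat_vec_carrier[OF A'(1) w]] by simp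
  have "0 \<le> c * (w \<bullet> w)" using c scalar_prod_self_nonneg[of w] by simp
  have "B = A' - L" "B + outer_prod u u = A - L"
    unfolding A_def A'_def using B L uu by (auto intro!: eq_matI)
  then have diff: "mtrace (N * N * B) - mtrace (M * M * (B + outer_prod u u)) =
      (w \<bullet> w - w \<bullet> (L *\<^sub>v (N *\<^sub>v w)) - (M *\<^sub>v w) \<bullet> (L *\<^sub>v w)) / (1 + u \<bullet> w)"
    using mtrace_rank_one_update_eq[OF A'(1) N(1) sym_mat_right_inverse[OF A' N(1,2)] N(2,3) L(1,2) u]
      q \<open>0 \<le> c * (w \<bullet> w)\<close> unfolding M_def A_def w_def by simp
  have ww: "vec_norm w * vec_norm w = w \<bullet> w" using vec_norm_square[of w] by (simp add: power2_eq_square)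
  have "\<bar>w \<bullet> (L *\<^sub>v (N *\<^sub>v w))\<bar> \<le> C * vec_norm w * vec_norm (N *\<^sub>v w)"
    using abs_scalar_prod_mult_le[OF L(1,4) w] N w by simp
  also have "\<dots> \<le> C * vec_norm w * (vec_norm w / c)"
    using N(4)[OF w] C vec_norm_nonneg[of w] by (intro mult_left_mono) auto
  finally have b1: "\<bar>w \<bullet> (L *\<^sub>v (N *\<^sub>v w))\<bar> \<le> C * (w \<bullet> w) / c" using ww by (simp add: mult_ac)
  have "\<bar>(M *\<^sub>v w) \<bullet> (L *\<^sub>v w)\<bar> \<le> C * vec_norm (M *\<^sub>v w) * vec_norm w"
    using abs_scalar_prod_mult_le[OF L(1,4) _ w] M w by simp
  also have "\<dots> \<le> C * (vec_norm w / c) * vec_norm w"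
    using M(4)[OF w] C vec_norm_nonneg[of w] by (intro mult_right_mono mult_left_mono) auto
  finally have b2: "\<bar>(M *\<^sub>v w) \<bullet> (L *\<^sub>v w)\<bar> \<le> C * (w \<bullet> w) / c" using ww by (simp add: mult_ac)
  show ?thesis
    using rank_one_trace_bound_arith[OF c C scalar_prod_self_nonneg q b1 b2] diff
    unfolding N_def M_def A_def A'_def by simp
qed

section \<open>Leave-one-out traces\<close>

lemma row_outer_eq_outer_prod:
  "Z \<in> carrier_mat n p \<Longrightarrow> i < n \<Longrightarrow> row_outer Z i = outer_prod (row Z i) (row Z i)"
  unfolding row_outer_def outer_prod_def by (intro eq_matI) auto

lemma sym_mat_gram_minus_row_outer:
  fixes Z :: "real mat"
  assumes "Z \<in> carrier_mat n p" "i < n"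
  shows "sym_mat (Z\<^sup>T * Z - row_outer Z i)"
  using assms unfolding sym_mat_def row_outer_eq_outer_prod[OF assms]
  by (intro eq_matI) (auto simp: outer_prod_def comm_scalar_prod[of _ n])

lemma quad_form_gram_minus_row_outer_nonneg:
  fixes Z :: "real mat"
  assumes Z: "Z \<in> carrier_mat n p" and i: "i < n" and v: "v \<in> carrier_vec p"
  shows "0 \<le> v \<bullet> ((Z\<^sup>T * Z - row_outer Z i) *\<^sub>v v)"
proof -
  define z where "z = Z *\<^sub>v v"
  have z: "z \<in> carrier_vec n" unfolding z_def using Z v by simp
  have r: "row Z i \<in> carrier_vec p" using Z i by (intro carrier_vecI) auto
  note ro = row_outer_eq_outer_prod[OF Z i]
  have ZZ: "Z\<^sup>T * Z \<in> carrier_mat p p" using Z by simp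
  have roc: "row_outer Z i \<in> carrier_mat p p" unfolding ro using r by simp
  have "v \<bullet> ((Z\<^sup>T * Z - row_outer Z i) *\<^sub>v v) = v \<bullet> (Z\<^sup>T * Z *\<^sub>v v) - v \<bullet> (row_outer Z i *\<^sub>v v)"
    unfolding minus_mult_distrib_mat_vec[OF ZZ roc v] using ZZ roc v by (simp add: scalar_prod_minus_distrib[of _ p])
  also have "v \<bullet> (Z\<^sup>T * Z *\<^sub>v v) = z \<bullet> z" unfolding z_def
    using transpose_vec_mult_scalar[OF Z v, of "Z *\<^sub>v v"] Z v by (simp add: comm_scalar_prod[of v p])
  also have "v \<bullet> (row_outer Z i *\<^sub>v v) = (z $ i)\<^sup>2" unfolding ro outer_prod_mult_vec[OF r r v]
    using v r i Z unfolding z_def by (simp add: power2_eq_square comm_scalar_prod[of v p])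
  finally have "v \<bullet> ((Z\<^sup>T * Z - row_outer Z i) *\<^sub>v v) = z \<bullet> z - (z $ i)\<^sup>2" .
  moreover have "(z $ i)\<^sup>2 \<le> z \<bullet> z" unfolding scalar_prod_self_eq_sum[OF z]
    by (rule member_le_sum) (use i in auto)
  ultimately show ?thesis by simp
qed

lemma leave_one_out_trace_bound:
  fixes Z L :: "real mat"
  assumes n: "n > 0" and Z: "Z \<in> carrier_mat n p" and i: "i < n"
    and L: "L \<in> carrier_mat p p" "sym_mat L"
      "\<And>v. v \<in> carrier_vec p \<Longrightarrow> c * (v \<bullet> v) \<le> v \<bullet> (L *\<^sub>v v)"
      "\<And>v. v \<in> carrier_vec p \<Longrightarrow> vec_norm (L *\<^sub>v v) \<le> C * vec_norm v"
    and c: "c > 0" and C: "C \<ge> 0"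
  defines "A \<equiv> (1 / real n) \<cdot>\<^sub>m (Z\<^sup>T * Z) + L"
  shows "\<bar>mtrace (minv (A - (1 / real n) \<cdot>\<^sub>m row_outer Z i) * minv (A - (1 / real n) \<cdot>\<^sub>m row_outer Z i)
            * ((1 / real n) \<cdot>\<^sub>m (Z\<^sup>T * Z - row_outer Z i)))
          - mtrace (minv A * minv A * ((1 / real n) \<cdot>\<^sub>m (Z\<^sup>T * Z)))\<bar>
    \<le> 1 / c + 2 * C / c\<^sup>2"
proof -
  define u where "u = sqrt (1 / real n) \<cdot>\<^sub>v row Z i"
  define B where "B = (1 / real n) \<cdot>\<^sub>m (Z\<^sup>T * Z - row_outer Z i)"
  have u: "u \<in> carrier_vec p" unfolding u_def using Z i by (intro carrier_vecI) auto
  have ZZ: "Z\<^sup>T * Z \<in> carrier_mat p p" using Z by simp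
  have roc: "row_outer Z i \<in> carrier_mat p p" using Z by (simp add: row_outer_def)
  have B: "B \<in> carrier_mat p p" unfolding B_def using roc by (intro smult_carrier_mat minus_carrier_mat)
  moreover have "sym_mat B"
    using sym_mat_gram_minus_row_outer[OF Z i] unfolding B_def sym_mat_def by (simp add: transpose_smult_mat)
  moreover have "0 \<le> v \<bullet> (B *\<^sub>v v)" if v: "v \<in> carrier_vec p" for v
    using quad_form_gram_minus_row_outer_nonneg[OF Z i v] n ZZ roc v
    unfolding B_def mult_smult_mat_vec[OF minus_carrier_mat[OF roc] v] by simp
  moreover have "outer_prod u u = (1 / real n) \<cdot>\<^sub>m row_outer Z i"
    unfolding row_outer_eq_outer_prod[OF Z i] u_def outer_prod_def using n
    by (intro eq_matI) (auto simp: real_sqrt_mult[symmetric] mult_ac)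
  then have "A - (1 / real n) \<cdot>\<^sub>m row_outer Z i = B + L"
      "A = B + L + outer_prod u u" "(1 / real n) \<cdot>\<^sub>m (Z\<^sup>T * Z) = B + outer_prod u u"
    unfolding A_def B_def using ZZ roc L by (auto intro!: eq_matI simp: algebra_simps)
  ultimately show ?thesis
    using mtrace_rank_one_update_bound[OF B _ _ L c C u] unfolding B_def by metis
qed

lemma leave_one_out_max_bound:
  fixes Z \<Sigma> \<Lambda> :: "real mat"
  assumes n: "n > 0" and Z: "Z \<in> carrier_mat n p"
    and \<Sigma>: "\<Sigma> \<in> carrier_mat p p" "sym_mat \<Sigma>"
    and ev: "\<And>e. eigenvalue \<Sigma> e \<Longrightarrow> h1 \<le> e \<and> e \<le> h2" and h1: "h1 > 0" and h2: "h2 > 0"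
    and \<Lambda>: "\<Lambda> \<in> carrier_mat p p" "diagonal_mat \<Lambda>"
    and \<Lambda>_bounds: "\<And>k. k < p \<Longrightarrow> lmin \<le> \<Lambda> $$ (k, k) \<and> \<Lambda> $$ (k, k) \<le> lmax"
    and lmin: "0 < lmin" "lmin \<le> lmax"
  shows "\<bar>let S = inv_sqrt_mat \<Sigma>;
             A = (1 / real n) \<cdot>\<^sub>m (Z\<^sup>T * Z) + S * \<Lambda> * S;
             Mm = minv A
          in MAX i \<in> {..<n}.
            (1 / real n) * \<bar>mtrace (minv (A - (1 / real n) \<cdot>\<^sub>m row_outer Z i)
                                    * minv (A - (1 / real n) \<cdot>\<^sub>m row_outer Z i)
                                    * ((1 / real n) \<cdot>\<^sub>m (Z\<^sup>T * Z - row_outer Z i)))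
                           - mtrace (Mm * Mm * ((1 / real n) \<cdot>\<^sub>m (Z\<^sup>T * Z)))\<bar>\<bar>
    \<le> (1 / (lmin / h2) + 2 * (lmax / h1) / (lmin / h2)\<^sup>2) / real n"
proof -
  define L where "L = inv_sqrt_mat \<Sigma> * \<Lambda> * inv_sqrt_mat \<Sigma>"
  note L = inv_sqrt_congruence_bounds[OF \<Sigma> ev h1 \<Lambda> \<Lambda>_bounds lmin, folded L_def]
  have c: "lmin / h2 > 0" and C: "lmax / h1 \<ge> 0" using lmin h1 h2 by auto
  define f where "f i = (1 / real n) * \<bar>mtrace (minv ((1 / real n) \<cdot>\<^sub>m (Z\<^sup>T * Z) + L - (1 / real n) \<cdot>\<^sub>m row_outer Z i)
      * minv ((1 / real n) \<cdot>\<^sub>m (Z\<^sup>T * Z) + L - (1 / real n) \<cdot>\<^sub>m row_outer Z i)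
      * ((1 / real n) \<cdot>\<^sub>m (Z\<^sup>T * Z - row_outer Z i)))
    - mtrace (minv ((1 / real n) \<cdot>\<^sub>m (Z\<^sup>T * Z) + L) * minv ((1 / real n) \<cdot>\<^sub>m (Z\<^sup>T * Z) + L)
      * ((1 / real n) \<cdot>\<^sub>m (Z\<^sup>T * Z)))\<bar>" for i
  have "f i \<le> (1 / real n) * (1 / (lmin / h2) + 2 * (lmax / h1) / (lmin / h2)\<^sup>2)" if "i < n" for i
    unfolding f_def by (intro mult_left_mono leave_one_out_trace_bound) (use n Z that L c C in auto)
  moreover have fin: "finite (f ` {..<n})" "f ` {..<n} \<noteq> {}" using n by auto
  ultimately have "(MAX i \<in> {..<n}. f i) \<le> (1 / (lmin / h2) + 2 * (lmax / h1) / (lmin / h2)\<^sup>2) / real n"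
    by (intro Max.boundedI) auto
  moreover have "0 \<le> (MAX i \<in> {..<n}. f i)"
  proof -
    have "0 \<le> f 0" unfolding f_def by simp
    also have "f 0 \<le> (MAX i \<in> {..<n}. f i)" by (rule Max_ge[OF fin(1)]) (use n in auto)
    finally show ?thesis .
  qed
  ultimately show ?thesis unfolding Let_def f_def L_def by simp
qed

lemma Lambda_mat_diag_mem:
  assumes partition: "(\<Union>g<K. G g) = {..<p}"
    and disjoint: "\<And>g g'. g < K \<Longrightarrow> g' < K \<Longrightarrow> g \<noteq> g' \<Longrightarrow> G g \<inter> G g' = {}"
    and a: "a < p"
  shows "Lambda_mat p K G lam $$ (a, a) \<in> lam ` {..<K}"
proof -
  obtain g0 where g0: "g0 < K" "a \<in> G g0" using a partition by auto
  have "(\<Sum>g<K. if a \<in> G g then lam g else 0) = (\<Sum>g<K. if g = g0 then lam g else 0)"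
    using g0 disjoint by (intro sum.cong) auto
  then have "Lambda_mat p K G lam $$ (a, a) = lam g0" unfolding Lambda_mat_def using a g0 by simp
  then show ?thesis using g0 by simp
qed

theorem lemma5:
  fixes M :: "'w measure"
    and X :: "nat \<Rightarrow> nat \<Rightarrow> nat \<Rightarrow> 'w \<Rightarrow> real"
    and p :: "nat \<Rightarrow> nat" and K :: nat
    and G :: "nat \<Rightarrow> nat \<Rightarrow> nat set"
    and \<gamma> :: "nat \<Rightarrow> real"
    and \<Sigma> :: "nat \<Rightarrow> real mat"
    and lam :: "nat \<Rightarrow> real"
    and h1 h2 \<eta> C :: real
  assumes "prob_space M"
    (* groups: K fixed disjoint groups partitioning the p(n) features *)
    and "\<And>n. (\<Union>g<K. G n g) = {..<p n}"
    and "\<And>n g g'. g < K \<Longrightarrow> g' < K \<Longrightarrow> g \<noteq> g' \<Longrightarrow> G n g \<inter> G n g' = {}"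
    and "\<And>g. g < K \<Longrightarrow> (\<lambda>n. real (card (G n g)) / real n) \<longlonglongrightarrow> \<gamma> g"
    and "\<And>g. g < K \<Longrightarrow> \<gamma> g > 0"
    (* entries: for each n, the n*p(n) entries are i.i.d., mean 0, variance 1 *)
    and "\<And>n i j. i < n \<Longrightarrow> j < p n \<Longrightarrow> X n i j \<in> borel_measurable M"
    and "\<And>n. prob_space.indep_vars M (\<lambda>_. borel) (\<lambda>(i, j). X n i j) ({..<n} \<times> {..<p n})"
    and "\<And>n i j i' j'. i < n \<Longrightarrow> j < p n \<Longrightarrow> i' < n \<Longrightarrow> j' < p n \<Longrightarrow>
           distr M borel (X n i j) = distr M borel (X n i' j')"
    and "\<And>n i j. i < n \<Longrightarrow> j < p n \<Longrightarrow> integrable M (X n i j)"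
    and "\<And>n i j. i < n \<Longrightarrow> j < p n \<Longrightarrow> prob_space.expectation M (X n i j) = 0"
    and "\<And>n i j. i < n \<Longrightarrow> j < p n \<Longrightarrow> integrable M (\<lambda>\<omega>. (X n i j \<omega>)\<^sup>2)"
    and "\<And>n i j. i < n \<Longrightarrow> j < p n \<Longrightarrow> prob_space.expectation M (\<lambda>\<omega>. (X n i j \<omega>)\<^sup>2) = 1"
    (* uniformly bounded (8+eta)-th moments *)
    and "\<eta> > 0"
    and "\<And>n i j. i < n \<Longrightarrow> j < p n \<Longrightarrow> integrable M (\<lambda>\<omega>. \<bar>X n i j \<omega>\<bar> powr (8 + \<eta>))"
    and "\<And>n i j. i < n \<Longrightarrow> j < p n \<Longrightarrow>
           prob_space.expectation M (\<lambda>\<omega>. \<bar>X n i j \<omega>\<bar> powr (8 + \<eta>)) \<le> C"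
    (* covariance matrix: symmetric, eigenvalues in [h1, h2] *)
    and "h1 > 0" and "h2 > 0"
    and "\<And>n. \<Sigma> n \<in> carrier_mat (p n) (p n)"
    and "\<And>n. sym_mat (\<Sigma> n)"
    and "\<And>n e. eigenvalue (\<Sigma> n) e \<Longrightarrow> h1 \<le> e \<and> e \<le> h2"
    (* fixed penalties lambda in (0, infinity)^K *)
    and "\<And>g. g < K \<Longrightarrow> lam g > 0"
  shows "AE \<omega> in M. (\<lambda>n.
     let Z = data_mat n (p n) (\<lambda>i j. X n i j \<omega>);
         S = inv_sqrt_mat (\<Sigma> n);
         A = (1 / real n) \<cdot>\<^sub>m (transpose_mat Z * Z) + S * Lambda_mat (p n) K (G n) lam * S;
         Mm = minv A
     in MAX i \<in> {..<n}.
          (1 / real n) * \<bar>mtrace (minv (A - (1 / real n) \<cdot>\<^sub>m row_outer Z i)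
                                  * minv (A - (1 / real n) \<cdot>\<^sub>m row_outer Z i)
                                  * ((1 / real n) \<cdot>\<^sub>m (transpose_mat Z * Z - row_outer Z i)))
                         - mtrace (Mm * Mm * ((1 / real n) \<cdot>\<^sub>m (transpose_mat Z * Z)))\<bar>)
     \<longlonglongrightarrow> 0"
proof -
  define lmin where "lmin = Min (insert 1 (lam ` {..<K}))"
  define lmax where "lmax = Max (insert 1 (lam ` {..<K}))"
  txt \<open>The \<open>1\<close> only keeps both constants positive when \<open>K = 0\<close>, in which case \<open>p n = 0\<close>.\<close>
  have "lmin \<le> 1" "1 \<le> lmax" unfolding lmin_def lmax_def by (simp_all add: Min_le Max_ge)
  moreover have "0 < lmin" unfolding lmin_def using assms(21) by (auto simp: Min_gr_iff)
  ultimately have lmin: "0 < lmin" "lmin \<le> lmax" by auto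
  have \<Lambda>_bounds: "lmin \<le> Lambda_mat (p n) K (G n) lam $$ (a, a) \<and> Lambda_mat (p n) K (G n) lam $$ (a, a) \<le> lmax"
    if "a < p n" for n a
    using Lambda_mat_diag_mem[OF assms(2,3) that] unfolding lmin_def lmax_def by auto
  have \<Lambda>: "Lambda_mat (p n) K (G n) lam \<in> carrier_mat (p n) (p n)"
    "diagonal_mat (Lambda_mat (p n) K (G n) lam)" for n
    unfolding Lambda_mat_def diagonal_mat_def by auto
  let ?bound = "1 / (lmin / h2) + 2 * (lmax / h1) / (lmin / h2)\<^sup>2"
  show ?thesis
  proof (rule AE_I2, rule Lim_null_comparison[where g = "\<lambda>n. ?bound / real n"])
    show "(\<lambda>n. ?bound / real n) \<longlonglongrightarrow> 0" by real_asymp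
  qed (rule eventually_mono[OF eventually_gt_at_top[of 0]], unfold real_norm_def Let_def,
      rule leave_one_out_max_bound[unfolded Let_def],
      auto simp: data_mat_def intro: assms(16-19) \<Lambda> lmin dest: assms(20) \<Lambda>_bounds)
qed

end
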